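(* Consider the setting described in the context, with fixed data $\mathcal{G}$, $\mathcal{I}_u$, $\mathcal{I}_\omega$ and fixed parameters $T,\tilde t, N, c_i, d, \epsilon_i, T_i, \underline\omega_i,\bar\omega_i$. For every $\hat P=[\hat p(0),\dots,\hat p(N-1)]\in\mathbb{R}^{n\times N}$, $f_0\in\mathbb{R}^m$, $\omega_0\in\mathbb{R}^n$ and $a_0\in\mathbb{A}$, the optimization problem $\mathbf{R}(\hat P,f_0,\omega_0,a_0)$ has a unique optimal solution $(\hat F^*,\hat\Omega^*,\hat A^*,\hat u^*,\beta^* )$. Moreover, $\hat u^*$ is a continuous and piece-wise affine function of $z$, where $z$ is the column vector stacking $(\hat P, f_0,\omega_0,a_0)$: there exist $l\in\mathbb{N}$ and matrices/vectors $\{H_i\}_{i=1}^l,\{S_i\}_{i=1}^l,\{h_i\}_{i=1}^l,\{s_i\}_{i=1}^l$ of suitable dimensions such that for every admissible $z$, $\hat u^* = S_i z+s_i$ whenever $H_i z\leqslant h_i$, $i\in\{1,\dots,l\}$ (and the sets $\{y: H_i y\leqslant h_i\}$ cover all admissible $z$).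
   Context: Let $\mathcal{G}=(\mathcal{I},\mathcal{E})$ be a connected undirected graph with $\mathcal{I}=\{1,\dots,n\}$ and $\mathcal{E}=\{e_1,\dots,e_m\}$, with a fixed arbitrary orientation and incidence matrix $D\in\mathbb{R}^{m\times n}$ ($D_{ki}=1$ if $i$ is the positive end of $e_k$, $-1$ if the negative end, $0$ otherwise). Let $M=\mathrm{diag}(M_1,\dots,M_n)$ and $E=\mathrm{diag}(E_1,\dots,E_n)$ with all $M_i,E_i>0$, and let $Y_b\in\mathbb{R}^{m\times m}$ be diagonal with positive diagonal entries. Let $\mathcal{I}_\omega\subseteq\mathcal{I}_u\subseteq\mathcal{I}$ and $\mathbb{A}=\{y\in\mathbb{R}^n: y_w=0 \text{ for all } w\in\mathcal{I}\setminus\mathcal{I}_u\}$. Parameters: $T>0$, $\tilde t>0$, $N=\lceil \tilde t/T\rceil$, $c_i>0$, $\epsilon_i>0$, $T_i>0$ for $i\in\mathcal{I}_u$, $d>0$, and $\underline\omega_i<\bar\omega_i$ for $i\in\mathcal{I}_\omega$. The problem $\mathbf{R}(\hat P,f_0,\omega_0,a_0)$ has decision variables $\hat f(k)\in\mathbb{R}^m$, $\hat\omega(k)\in\mathbb{R}^n$, $\hat\alpha(k)\in\mathbb{R}^n$ ($k=0,\dots,N$), $\hat u\in\mathbb{R}^n$, $\beta\in\mathbb{R}$ (with $\hat F=[\hat f(0),\dots,\hat f(N)]$, $\hat\Omega$, $\hat A$ defined analogously), and reads: minimize $\sum_{i\in\mathcal{I}_u} c_i\hat u_i^2 + d\beta^2$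 subject to, for all $k\in\{0,\dots,N-1\}$: $\hat f(k+1)=\hat f(k)+TY_bD\hat\omega(k)$; $M\hat\omega(k+1)=M\hat\omega(k)+T(-E\hat\omega(k)-D^T\hat f(k)+\hat p(k)+\hat u)$; $\hat\alpha_i(k+1)=\hat\alpha_i(k)+T(-\hat\alpha_i(k)/T_i-\hat\omega_i(k)+\hat u_i)$ for $i\in\mathcal{I}_u$; $\hat\alpha_i(k)=0$ for all $k$ and $i\in\mathcal{I}\setminus\mathcal{I}_u$; $\hat u\in\mathbb{A}$; $\hat f(0)=f_0$, $\hat\omega(0)=\omega_0$, $\hat\alpha(0)=a_0$; $\underline\omega_i-\beta\leqslant\hat\omega_i(k+1)\leqslant\bar\omega_i+\beta$ for all $i\in\mathcal{I}_\omega$; and $|\hat u_i|\leqslant\epsilon_i|a_{0,i}|$ for all $i\in\mathcal{I}_u$. Admissible $z$ are those with $a_0\in\mathbb{A}$. *)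

theory Defs
  imports "HOL-Analysis.Analysis"
begin

text \<open>Vertices are the elements of a finite type 'n (so n = CARD('n)), edges the
elements of a finite type 'm (m = CARD('m)). The fixed orientation of edge k is
given by its positive end pos k and its negative end neg k.\<close>

definition incidence :: "('m \<Rightarrow> 'n) \<Rightarrow> ('m \<Rightarrow> 'n) \<Rightarrow> real^'n^'m" where
  "incidence pos neg = (\<chi> k i. if i = pos k then 1 else if i = neg k then -1 else 0)"

definition connected_simple_graph :: "('m::finite \<Rightarrow> 'n::finite) \<Rightarrow> ('m \<Rightarrow> 'n) \<Rightarrow> bool" where
  "connected_simple_graph pos neg \<longleftrightarrow>
     (\<forall>k. pos k \<noteq> neg k) \<and>
     (\<forall>k k'. {pos k, neg k} = {pos k', neg k'} \<longrightarrow> k = k') \<and>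
     (\<forall>i j. (i, j) \<in> ({(pos k, neg k) | k. True} \<union> {(neg k, pos k) | k. True})\<^sup>*)"

definition is_pos_diag :: "real^'a^'a \<Rightarrow> bool" where
  "is_pos_diag A \<longleftrightarrow> (\<forall>i j. i \<noteq> j \<longrightarrow> A $ i $ j = 0) \<and> (\<forall>i. A $ i $ i > 0)"

definition setA :: "'n set \<Rightarrow> (real^'n) set" where
  "setA Iu = {y. \<forall>w. w \<notin> Iu \<longrightarrow> y $ w = 0}"

type_synonym ('m,'n) sol =
  "(nat \<Rightarrow> real^'m) \<times> (nat \<Rightarrow> real^'n) \<times> (nat \<Rightarrow> real^'n) \<times> (real^'n) \<times> real"

text \<open>Decision trajectories are functions
on nat; by convention they vanish beyond the horizon N, so that they faithfully
represent the matrices F, Omega, A with columns 0..N.\<close>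
definition R_feasible ::
  "real \<Rightarrow> nat \<Rightarrow> real^'m^'m \<Rightarrow> real^'n^'m \<Rightarrow> real^'n^'n \<Rightarrow> real^'n^'n
   \<Rightarrow> ('n \<Rightarrow> real) \<Rightarrow> 'n set \<Rightarrow> 'n set \<Rightarrow> ('n \<Rightarrow> real) \<Rightarrow> ('n \<Rightarrow> real) \<Rightarrow> ('n \<Rightarrow> real)
   \<Rightarrow> (nat \<Rightarrow> real^'n) \<Rightarrow> real^'m \<Rightarrow> real^'n \<Rightarrow> real^'n \<Rightarrow> ('m,'n) sol \<Rightarrow> bool" where
  "R_feasible T N Yb D M E Ti Iu Iw wlo whi eps P f0 w0 a0 s \<longleftrightarrow>
    (case s of (F, W, Al, u, \<beta>) \<Rightarrow>
      (\<forall>k<N. F (k+1) = F k + T *\<^sub>R (Yb *v (D *v W k))) \<and>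
      (\<forall>k<N. M *v W (k+1) = M *v W k + T *\<^sub>R (- (E *v W k) - ((transpose D) *v F k) + P k + u)) \<and>
      (\<forall>k<N. \<forall>i\<in>Iu. Al (k+1) $ i = Al k $ i + T * (- Al k $ i / Ti i - W k $ i + u $ i)) \<and>
      (\<forall>k\<le>N. \<forall>i. i \<notin> Iu \<longrightarrow> Al k $ i = 0) \<and>
      u \<in> setA Iu \<and>
      F 0 = f0 \<and> W 0 = w0 \<and> Al 0 = a0 \<and>
      (\<forall>k<N. \<forall>i\<in>Iw. wlo i - \<beta> \<le> W (k+1) $ i \<and> W (k+1) $ i \<le> whi i + \<beta>) \<and>
      (\<forall>i\<in>Iu. \<bar>u $ i\<bar> \<le> eps i * \<bar>a0 $ i\<bar>) \<and>
      (\<forall>k>N. F k = 0 \<and> W k = 0 \<and> Al k = 0))"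

definition R_cost :: "('n::finite \<Rightarrow> real) \<Rightarrow> real \<Rightarrow> 'n set \<Rightarrow> ('m,'n) sol \<Rightarrow> real" where
  "R_cost c d Iu s = (case s of (F, W, Al, u, \<beta>) \<Rightarrow> (\<Sum>i\<in>Iu. c i * (u $ i)\<^sup>2) + d * \<beta>\<^sup>2)"

definition R_optimal ::
  "real \<Rightarrow> nat \<Rightarrow> real^'m^'m \<Rightarrow> real^'n^'m \<Rightarrow> real^'n^'n \<Rightarrow> real^'n^'n
   \<Rightarrow> ('n \<Rightarrow> real) \<Rightarrow> 'n set \<Rightarrow> 'n set \<Rightarrow> ('n \<Rightarrow> real) \<Rightarrow> ('n \<Rightarrow> real) \<Rightarrow> ('n \<Rightarrow> real)
   \<Rightarrow> ('n \<Rightarrow> real) \<Rightarrow> real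
   \<Rightarrow> (nat \<Rightarrow> real^'n) \<Rightarrow> real^'m \<Rightarrow> real^'n \<Rightarrow> real^'n \<Rightarrow> ('m,'n) sol \<Rightarrow> bool" where
  "R_optimal T N Yb D M E Ti Iu Iw wlo whi eps c d P f0 w0 a0 s \<longleftrightarrow>
     R_feasible T N Yb D M E Ti Iu Iw wlo whi eps P f0 w0 a0 s \<and>
     (\<forall>s'. R_feasible T N Yb D M E Ti Iu Iw wlo whi eps P f0 w0 a0 s' \<longrightarrow>
        R_cost c d Iu s \<le> R_cost c d Iu s')"

definition u_opt ::
  "real \<Rightarrow> nat \<Rightarrow> real^'m^'m \<Rightarrow> real^'n^'m \<Rightarrow> real^'n^'n \<Rightarrow> real^'n^'n
   \<Rightarrow> ('n \<Rightarrow> real) \<Rightarrow> 'n set \<Rightarrow> 'n set \<Rightarrow> ('n \<Rightarrow> real) \<Rightarrow> ('n \<Rightarrow> real) \<Rightarrow> ('n \<Rightarrow> real)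
   \<Rightarrow> ('n \<Rightarrow> real) \<Rightarrow> real
   \<Rightarrow> (nat \<Rightarrow> real^'n) \<Rightarrow> real^'m \<Rightarrow> real^'n \<Rightarrow> real^'n \<Rightarrow> real^'n" where
  "u_opt T N Yb D M E Ti Iu Iw wlo whi eps c d P f0 w0 a0 =
     fst (snd (snd (snd (THE s. R_optimal T N Yb D M E Ti Iu Iw wlo whi eps c d P f0 w0 a0 s))))"

text \<open>A row of a matrix acting on the stacked vector z = (p(0),...,p(N-1), f0, w0, a0)
is given by its coefficient blocks (cP, cf, cw, ca); this is its value at z.\<close>
type_synonym ('m,'n) zrow = "(nat \<Rightarrow> real^'n) \<times> (real^'m) \<times> (real^'n) \<times> (real^'n)"

definition zlin :: "nat \<Rightarrow> ('m,'n) zrow \<Rightarrow> (nat \<Rightarrow> real^'n) \<Rightarrow> real^'m \<Rightarrow> real^'n \<Rightarrow> real^'n \<Rightarrow> real" where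
  "zlin N r P f0 w0 a0 = (case r of (cP, cf, cw, ca) \<Rightarrow>
      (\<Sum>k<N. cP k \<bullet> P k) + cf \<bullet> f0 + cw \<bullet> w0 + ca \<bullet> a0)"

definition z_continuous ::
  "nat \<Rightarrow> 'n set \<Rightarrow> ((nat \<Rightarrow> real^'n) \<Rightarrow> real^'m \<Rightarrow> real^'n \<Rightarrow> real^'n \<Rightarrow> real^'n) \<Rightarrow> bool" where
  "z_continuous N Iu g \<longleftrightarrow>
     (\<forall>P f0 w0 a0. a0 \<in> setA Iu \<longrightarrow>
       (\<forall>\<epsilon>>0. \<exists>\<delta>>0. \<forall>P' f0' w0' a0'. a0' \<in> setA Iu \<longrightarrow>
          (\<forall>k<N. dist (P' k) (P k) < \<delta>) \<longrightarrow> dist f0' f0 < \<delta> \<longrightarrow> dist w0' w0 < \<delta> \<longrightarrow>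
          dist a0' a0 < \<delta> \<longrightarrow> dist (g P' f0' w0' a0') (g P f0 w0 a0) < \<epsilon>))"

end

theory Submission
  imports Defs
begin

text \<open>Eliminating the states through the linear dynamics leaves a strictly convex quadratic
  program in (u, beta): every predicted frequency is an affine function of z plus a fixed linear
  function of u. In the variable y = (sqrt c_i u_i, sqrt d beta) the cost is the squared norm,
  so the optimum is the minimum-norm point of a polyhedron {y. a_j y <= b_j(z)} whose normals do
  not depend on z; it exists and is unique. By the KKT conditions, refined by Farkas' lemma and
  conic Caratheodory to linearly independent active normals, this point is a fixed linear
  function of b on each of finitely many polyhedral regions of b, one for each independent
  active set. The bounds b_j(z) are affine in z except for the terms eps_i abs(a0_i), which are
  affine on each sign orthant of a0. The resulting finitely many closed regions cover all
  admissible z, and continuity follows because a region containing points arbitrarily close to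
  z contains z itself.\<close>

section \<open>Minimum-norm points of polyhedra\<close>

lemma convex_cone_hull_finite_nonneg_comb:
  fixes X :: "'v::real_vector set"
  assumes "finite X" "v \<in> convex_cone hull X"
  obtains \<mu> where "\<forall>x\<in>X. 0 \<le> \<mu> x" "v = (\<Sum>x\<in>X. \<mu> x *\<^sub>R x)"
proof -
  consider "v = 0" | t x where "x \<in> convex hull X" "0 \<le> t" "v = t *\<^sub>R x"
    using assms(2) by (auto simp: convex_cone_hull_convex_hull)
  then show ?thesis
  proof cases
    case 1
    then show ?thesis by (intro that[of "\<lambda>_. 0"]) auto
  next
    case 2
    then obtain \<nu> where "\<forall>x\<in>X. 0 \<le> \<nu> x" "x = (\<Sum>x\<in>X. \<nu> x *\<^sub>R x)"
      using assms(1) by (auto simp: convex_hull_finite)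
    with 2 show ?thesis
      by (intro that[of "\<lambda>x. t * \<nu> x"]) (auto simp: scaleR_sum_right)
  qed
qed

lemma farkas:
  fixes X :: "'v::euclidean_space set"
  assumes "finite X" and dual: "\<And>d. \<forall>x\<in>X. x \<bullet> d \<le> 0 \<Longrightarrow> v \<bullet> d \<le> 0"
  shows "v \<in> convex_cone hull X"
proof (rule ccontr)
  let ?C = "convex_cone hull X"
  assume "v \<notin> ?C"
  then obtain a b where ab: "a \<bullet> v < b" "\<forall>x\<in>?C. b < a \<bullet> x"
    using separating_hyperplane_closed_point[OF convex_convex_cone_hull closed_convex_cone_hull[OF assms(1)]]
    by metis
  then have "b < 0"
    using convex_cone_hull_contains_0 by fastforce
  have "0 \<le> a \<bullet> x" if "x \<in> X" for x
  proof (rule ccontr)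
    assume "\<not> 0 \<le> a \<bullet> x"
    then have "(b / (a \<bullet> x)) *\<^sub>R x \<in> ?C"
      using \<open>b < 0\<close> \<open>x \<in> X\<close> by (intro convex_cone_hull_mul hull_inc) (auto simp: divide_nonpos_neg)
    with ab(2) \<open>\<not> 0 \<le> a \<bullet> x\<close> show False by fastforce
  qed
  then have "v \<bullet> (- a) \<le> 0"
    by (intro dual) (auto simp: inner_commute)
  with ab(1) \<open>b < 0\<close> show False by (simp add: inner_commute)
qed

lemma dependent_finite_pos_coeff:
  fixes X :: "'v::real_vector set"
  assumes "finite X" "dependent X"
  obtains c w where "w \<in> X" "0 < c w" "(\<Sum>x\<in>X. c x *\<^sub>R x) = 0"
proof -
  obtain c0 w where "w \<in> X" "c0 w \<noteq> 0" "(\<Sum>x\<in>X. c0 x *\<^sub>R x) = 0"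
    using dependent_finite[OF assms(1)] assms(2) by blast
  then show ?thesis
    by (intro that[of w "\<lambda>x. sgn (c0 w) * c0 x"])
      (auto simp: sgn_real_def simp flip: scaleR_scaleR scaleR_sum_right)
qed

text \<open>Moving along a linear dependence until the first weight hits zero removes one vector.\<close>
lemma dependent_nonneg_comb_remove:
  fixes X :: "'v::real_vector set"
  assumes "finite X" "dependent X" "\<forall>x\<in>X. 0 \<le> \<mu> x" "v = (\<Sum>x\<in>X. \<mu> x *\<^sub>R x)"
  obtains x0 \<mu>' where "x0 \<in> X" "\<forall>x\<in>X. 0 \<le> \<mu>' x" "v = (\<Sum>x\<in>X - {x0}. \<mu>' x *\<^sub>R x)"
proof -
  obtain c w where w: "w \<in> X" "0 < c w" and c: "(\<Sum>x\<in>X. c x *\<^sub>R x) = 0"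
    using dependent_finite_pos_coeff[OF assms(1,2)] .
  define Xp where "Xp = {x\<in>X. 0 < c x}"
  have fin: "finite Xp" "w \<in> Xp"
    using assms(1) w by (auto simp: Xp_def)
  define t where "t = Min ((\<lambda>x. \<mu> x / c x) ` Xp)"
  have "t \<in> (\<lambda>x. \<mu> x / c x) ` Xp"
    unfolding t_def using fin by (intro Min_in) auto
  then obtain x0 where x0: "x0 \<in> Xp" "t = \<mu> x0 / c x0"
    by blast
  then have "0 \<le> t"
    using assms(3) by (auto simp: Xp_def)
  define \<mu>' where "\<mu>' x = \<mu> x - t * c x" for x
  have "0 \<le> \<mu>' x" if "x \<in> X" for x
  proof (cases "0 < c x")
    case True
    then have "t \<le> \<mu> x / c x"
      using fin that by (simp add: t_def Xp_def)
    with True show ?thesis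
      by (simp add: \<mu>'_def pos_le_divide_eq)
  next
    case False
    then have "t * c x \<le> 0"
      using \<open>0 \<le> t\<close> by (simp add: mult_nonneg_nonpos)
    moreover have "0 \<le> \<mu> x"
      using assms(3) that by blast
    ultimately show ?thesis
      by (simp add: \<mu>'_def)
  qed
  moreover have "v = (\<Sum>x\<in>X. \<mu>' x *\<^sub>R x)"
    using c assms(4) by (simp add: \<mu>'_def scaleR_diff_left sum_subtractf flip: scaleR_scaleR scaleR_sum_right)
  moreover have "\<mu>' x0 = 0"
    using x0 by (auto simp: \<mu>'_def Xp_def)
  ultimately show ?thesis
    using x0 assms(1) sum.remove[of X x0 "\<lambda>x. \<mu>' x *\<^sub>R x"] by (intro that[of x0 \<mu>']) (auto simp: Xp_def)
qed

lemma conic_caratheodory: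
  fixes X :: "'v::real_vector set"
  assumes "finite X" "\<forall>x\<in>X. 0 \<le> \<mu> x" "v = (\<Sum>x\<in>X. \<mu> x *\<^sub>R x)"
  shows "\<exists>T\<subseteq>X. independent T \<and> (\<exists>\<nu>. (\<forall>x\<in>T. 0 \<le> \<nu> x) \<and> v = (\<Sum>x\<in>T. \<nu> x *\<^sub>R x))"
  using assms
proof (induction X arbitrary: \<mu> rule: finite_psubset_induct)
  case (psubset X)
  show ?case
  proof (cases "independent X")
    case True
    with psubset.prems show ?thesis
      by blast
  next
    case False
    then obtain x0 \<mu>' where "x0 \<in> X" "\<forall>x\<in>X. 0 \<le> \<mu>' x" "v = (\<Sum>x\<in>X - {x0}. \<mu>' x *\<^sub>R x)"
      using dependent_nonneg_comb_remove[OF psubset.hyps(1) _ psubset.prems] by blast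
    moreover have "X - {x0} \<subset> X"
      using \<open>x0 \<in> X\<close> by blast
    ultimately show ?thesis
      using psubset.IH[of "X - {x0}" \<mu>'] by blast
  qed
qed

definition lin_ineq_set :: "('r \<Rightarrow> 'v::real_inner) \<Rightarrow> 'r set \<Rightarrow> ('r \<Rightarrow> real) \<Rightarrow> 'v set" where
  "lin_ineq_set a R b = {y. \<forall>j\<in>R. a j \<bullet> y \<le> b j}"

lemma lin_ineq_set_eq_INT: "lin_ineq_set a R b = (\<Inter>j\<in>R. {y. a j \<bullet> y \<le> b j})"
  by (auto simp: lin_ineq_set_def)

lemma closed_lin_ineq_set: "closed (lin_ineq_set a R b)"
  unfolding lin_ineq_set_eq_INT by (intro closed_INT ballI closed_halfspace_le)

lemma convex_lin_ineq_set: "convex (lin_ineq_set a R b)"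
  unfolding lin_ineq_set_eq_INT by (intro convex_INT ballI convex_halfspace_le)

text \<open>Moving from the closest point along a direction that keeps the active constraints
  satisfied stays in the set for a short while, so the norm cannot decrease to first order.\<close>
lemma closest_point_normal_cone:
  fixes a :: "'r \<Rightarrow> 'v::euclidean_space"
  assumes "finite R" "lin_ineq_set a R b \<noteq> {}"
  defines "y \<equiv> closest_point (lin_ineq_set a R b) 0"
  assumes d: "\<forall>j\<in>R. a j \<bullet> y = b j \<longrightarrow> a j \<bullet> d \<le> 0"
  shows "0 \<le> y \<bullet> d"
proof -
  let ?K = "lin_ineq_set a R b"
  have "y \<in> ?K"
    unfolding y_def using assms(2) by (intro closest_point_in_set closed_lin_ineq_set)
  have "\<forall>\<^sub>F t in at_right 0. a j \<bullet> (y + t *\<^sub>R d) \<le> b j" if "j \<in> R" for j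
  proof (cases "a j \<bullet> y = b j")
    case True
    have "a j \<bullet> d \<le> 0"
      using d that True by blast
    have ineq: "a j \<bullet> (y + t *\<^sub>R d) \<le> b j" if "0 < t" for t :: real
      using True \<open>a j \<bullet> d \<le> 0\<close> that by (simp add: inner_add_right mult_nonneg_nonpos)
    show ?thesis
      using eventually_at_right_less[of 0] by (rule eventually_mono) (rule ineq)
  next
    case False
    then have "a j \<bullet> y < b j"
      using \<open>y \<in> ?K\<close> that by (auto simp: lin_ineq_set_def order_less_le)
    moreover have "((\<lambda>t. a j \<bullet> (y + t *\<^sub>R d)) \<longlongrightarrow> a j \<bullet> (y + 0 *\<^sub>R d)) (at_right 0)"
      by (intro tendsto_intros)
    ultimately have "\<forall>\<^sub>F t in at_right 0. a j \<bullet> (y + t *\<^sub>R d) < b j"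
      by (auto elim: order_tendstoD(2)[rotated])
    then show ?thesis
      by (rule eventually_mono) simp
  qed
  then have "\<forall>\<^sub>F t in at_right 0. y + t *\<^sub>R d \<in> ?K"
    using \<open>finite R\<close> by (simp add: lin_ineq_set_def eventually_ball_finite_distrib)
  then have "\<forall>\<^sub>F t in at_right 0. 0 < t \<and> y + t *\<^sub>R d \<in> ?K"
    using eventually_at_right_less[of 0] by (rule eventually_conj[rotated])
  then obtain t where "0 < t" "y + t *\<^sub>R d \<in> ?K"
    using eventually_happens'[OF trivial_limit_at_right_real] by blast
  then have "0 \<le> t * (y \<bullet> d)"
    using closest_point_dot[OF convex_lin_ineq_set closed_lin_ineq_set, of "y + t *\<^sub>R d" a R b 0]
    by (simp add: y_def)
  with \<open>0 < t\<close> show ?thesis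
    by (simp add: zero_le_mult_iff)
qed

lemma closest_point_kkt:
  fixes a :: "'r \<Rightarrow> 'v::euclidean_space"
  assumes "finite R" "lin_ineq_set a R b \<noteq> {}"
  defines "y \<equiv> closest_point (lin_ineq_set a R b) 0"
  obtains J \<mu> where "J \<subseteq> R" "inj_on a J" "independent (a ` J)" "\<forall>j\<in>J. 0 \<le> \<mu> j"
    "y = - (\<Sum>j\<in>J. \<mu> j *\<^sub>R a j)" "\<forall>j\<in>J. a j \<bullet> y = b j"
proof -
  define A where "A = {j\<in>R. a j \<bullet> y = b j}"
  have "finite A"
    using assms(1) by (simp add: A_def)
  have "- y \<in> convex_cone hull (a ` A)"
  proof (rule farkas)
    fix d assume "\<forall>x\<in>a ` A. x \<bullet> d \<le> 0"
    then have "0 \<le> y \<bullet> d"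
      using closest_point_normal_cone[OF assms(1,2), folded y_def] by (auto simp: A_def)
    then show "- y \<bullet> d \<le> 0"
      by simp
  qed (use \<open>finite A\<close> in simp)
  then obtain \<theta> where "\<forall>x\<in>a ` A. 0 \<le> \<theta> x" "- y = (\<Sum>x\<in>a ` A. \<theta> x *\<^sub>R x)"
    using convex_cone_hull_finite_nonneg_comb \<open>finite A\<close> by blast
  then obtain T \<nu> where T: "T \<subseteq> a ` A" "independent T" "\<forall>x\<in>T. 0 \<le> \<nu> x" "- y = (\<Sum>x\<in>T. \<nu> x *\<^sub>R x)"
    using conic_caratheodory[of "a ` A" \<theta> "- y"] \<open>finite A\<close> by blast
  then obtain J where J: "J \<subseteq> A" "inj_on a J" "T = a ` J"
    by (auto simp: subset_image_inj)
  show ?thesis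
  proof (rule that[of J "\<nu> \<circ> a"])
    have "- y = (\<Sum>j\<in>J. (\<nu> \<circ> a) j *\<^sub>R a j)"
      using T(4) J(2,3) by (simp add: sum.reindex)
    then show "y = - (\<Sum>j\<in>J. (\<nu> \<circ> a) j *\<^sub>R a j)"
      by (metis minus_minus)
  qed (use T J in \<open>auto simp: A_def\<close>)
qed

definition dual_basis :: "('r \<Rightarrow> 'v::real_inner) \<Rightarrow> 'r set \<Rightarrow> ('r \<Rightarrow> 'v) \<Rightarrow> bool" where
  "dual_basis a J Y \<longleftrightarrow> (\<forall>j\<in>J. Y j \<in> span (a ` J)) \<and> (\<forall>i\<in>J. \<forall>j\<in>J. a i \<bullet> Y j = (if i = j then 1 else 0))"

lemma dual_vector_exists:
  fixes a :: "'r \<Rightarrow> 'v::euclidean_space"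
  assumes "inj_on a J" "independent (a ` J)" "j \<in> J"
  obtains y where "y \<in> span (a ` J)" "\<forall>i\<in>J. a i \<bullet> y = (if i = j then 1 else 0)"
proof -
  let ?S = "a ` (J - {j})"
  obtain p q where pq: "p \<in> span ?S" "\<And>w. w \<in> span ?S \<Longrightarrow> orthogonal q w" "a j = p + q"
    using orthogonal_subspace_decomp_exists[of ?S "a j"] by metis
  have "?S = a ` J - {a j}"
    using assms(1,3) by (auto simp: inj_on_eq_iff)
  then have "q \<noteq> 0"
    using pq assms(2,3) by (auto simp: dependent_def)
  have "span ?S \<subseteq> span (a ` J)"
    by (intro span_mono) auto
  moreover have "a j \<in> span (a ` J)"
    using assms(3) by (intro span_base) auto
  ultimately have "q \<in> span (a ` J)"
    using pq by (metis add_diff_cancel_left' span_diff subsetD)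
  have "a i \<bullet> q = (if i = j then q \<bullet> q else 0)" if "i \<in> J" for i
  proof (cases "i = j")
    case True
    have "p \<bullet> q = 0"
      using pq(2)[OF pq(1)] by (simp add: orthogonal_def inner_commute)
    with True show ?thesis
      using pq(3) by (simp add: inner_add_left)
  next
    case False
    then have "orthogonal q (a i)"
      using that by (intro pq(2) span_base) auto
    with False show ?thesis
      by (simp add: orthogonal_def inner_commute)
  qed
  with \<open>q \<noteq> 0\<close> show ?thesis
    by (intro that[of "q /\<^sub>R (q \<bullet> q)"] span_mul \<open>q \<in> span (a ` J)\<close>) auto
qed

lemma dual_basis_exists:
  fixes a :: "'r \<Rightarrow> 'v::euclidean_space"
  assumes "inj_on a J" "independent (a ` J)"
  obtains Y where "dual_basis a J Y"
proof -
  have "\<forall>j\<in>J. \<exists>y. y \<in> span (a ` J) \<and> (\<forall>i\<in>J. a i \<bullet> y = (if i = j then 1 else 0))"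
    using dual_vector_exists[OF assms] by metis
  then show ?thesis
    using that unfolding dual_basis_def by metis
qed

lemma dual_basis_expansion:
  assumes "dual_basis a J Y" "finite J" "v \<in> span (a ` J)"
  shows "v = (\<Sum>j\<in>J. (Y j \<bullet> v) *\<^sub>R a j)"
  using assms(3)
proof (induction rule: span_induct)
  case base
  let ?E = "\<lambda>v. (\<Sum>j\<in>J. (Y j \<bullet> v) *\<^sub>R a j)"
  show ?case
    unfolding subspace_def
  proof (intro conjI ballI allI)
    fix x y assume "x \<in> {v. v = ?E v}" "y \<in> {v. v = ?E v}"
    then have "x + y = ?E x + ?E y"
      by (intro arg_cong2[where f = plus]) simp_all
    also have "\<dots> = ?E (x + y)"
      by (simp add: inner_add_right scaleR_add_left sum.distrib)
    finally show "x + y \<in> {v. v = ?E v}"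
      by (simp only: mem_Collect_eq)
  next
    fix c x assume "x \<in> {v. v = ?E v}"
    then have "c *\<^sub>R x = c *\<^sub>R ?E x"
      by (intro arg_cong[where f = "scaleR c"]) simp
    also have "\<dots> = ?E (c *\<^sub>R x)"
      by (simp add: scaleR_sum_right)
    finally show "c *\<^sub>R x \<in> {v. v = ?E v}"
      by (simp only: mem_Collect_eq)
  qed simp
next
  case (step x)
  then obtain i where "i \<in> J" "x = a i"
    by blast
  then have "(\<Sum>j\<in>J. (Y j \<bullet> x) *\<^sub>R a j) = (\<Sum>j\<in>J. (if j = i then a j else 0))"
    using assms(1) by (intro sum.cong) (auto simp: dual_basis_def inner_commute)
  also have "\<dots> = x"
    using \<open>i \<in> J\<close> \<open>x = a i\<close> assms(2) by simp
  finally show ?case ..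
qed

definition active_point :: "'r set \<Rightarrow> ('r \<Rightarrow> 'v::real_vector) \<Rightarrow> ('r \<Rightarrow> real) \<Rightarrow> 'v" where
  "active_point J Y b = (\<Sum>j\<in>J. b j *\<^sub>R Y j)"

definition kkt_region :: "('r \<Rightarrow> 'v::real_inner) \<Rightarrow> 'r set \<Rightarrow> 'r set \<Rightarrow> ('r \<Rightarrow> 'v) \<Rightarrow> ('r \<Rightarrow> real) \<Rightarrow> bool" where
  "kkt_region a R J Y b \<longleftrightarrow>
     (\<forall>i\<in>R. a i \<bullet> active_point J Y b \<le> b i) \<and> (\<forall>j\<in>J. Y j \<bullet> active_point J Y b \<le> 0)"

lemma active_point_in_span: "dual_basis a J Y \<Longrightarrow> active_point J Y b \<in> span (a ` J)"
  unfolding active_point_def dual_basis_def by (intro span_sum span_scale) auto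

lemma inner_active_point:
  assumes "dual_basis a J Y" "finite J" "i \<in> J"
  shows "a i \<bullet> active_point J Y b = b i"
proof -
  have "a i \<bullet> active_point J Y b = (\<Sum>j\<in>J. if j = i then b j else 0)"
    using assms(1,3) unfolding active_point_def dual_basis_def
    by (auto simp: inner_sum_right intro: sum.cong)
  with assms(2,3) show ?thesis
    by simp
qed

lemma active_point_cong: "(\<forall>j\<in>J. b j = b' j) \<Longrightarrow> active_point J Y b = active_point J Y b'"
  by (simp add: active_point_def)

lemma kkt_region_cong:
  assumes "J \<subseteq> R" "\<forall>j\<in>R. b j = b' j"
  shows "kkt_region a R J Y b \<longleftrightarrow> kkt_region a R J Y b'"
proof -
  have "active_point J Y b = active_point J Y b'"
    using assms by (intro active_point_cong) auto
  with assms(2) show ?thesis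
    by (simp add: kkt_region_def)
qed

text \<open>Inside a KKT region y = (SUM j:J. (Y j \<bullet> y) a j) with Y j \<bullet> y \<le> 0 for the active
  constraints, hence y \<bullet> (y' - y) \<ge> 0 for every feasible y'.\<close>
lemma closest_point_eq_active_point:
  fixes a :: "'r \<Rightarrow> 'v::euclidean_space"
  assumes "J \<subseteq> R" "finite J" "dual_basis a J Y" "kkt_region a R J Y b"
  shows "closest_point (lin_ineq_set a R b) 0 = active_point J Y b"
proof (rule closest_point_unique[symmetric, OF convex_lin_ineq_set closed_lin_ineq_set])
  let ?y = "active_point J Y b"
  show "?y \<in> lin_ineq_set a R b"
    using assms(4) by (simp add: kkt_region_def lin_ineq_set_def)
  show "\<forall>y'\<in>lin_ineq_set a R b. dist 0 ?y \<le> dist 0 y'"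
  proof
    fix y' assume y': "y' \<in> lin_ineq_set a R b"
    have "?y \<bullet> (y' - ?y) = (\<Sum>j\<in>J. (Y j \<bullet> ?y) * (a j \<bullet> (y' - ?y)))"
      by (subst dual_basis_expansion[OF assms(3,2) active_point_in_span[OF assms(3)]])
        (simp add: inner_sum_left)
    also have "\<dots> = (\<Sum>j\<in>J. (Y j \<bullet> ?y) * (a j \<bullet> y' - b j))"
      using inner_active_point[OF assms(3,2)] by (intro sum.cong) (auto simp: inner_diff_right)
    also have "\<dots> \<ge> 0"
      using assms(1,4) y' by (intro sum_nonneg mult_nonpos_nonpos) (auto simp: kkt_region_def lin_ineq_set_def)
    finally have "0 \<le> ?y \<bullet> (y' - ?y)" .
    moreover have "y' \<bullet> y' = ?y \<bullet> ?y + 2 * (?y \<bullet> (y' - ?y)) + (y' - ?y) \<bullet> (y' - ?y)"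
      by (simp add: inner_diff_left inner_diff_right inner_commute algebra_simps)
    ultimately have "?y \<bullet> ?y \<le> y' \<bullet> y'"
      using inner_ge_zero[of "y' - ?y"] by linarith
    then show "dist 0 ?y \<le> dist 0 y'"
      by (simp add: norm_le)
  qed
qed

lemma kkt_region_if_closest_point:
  fixes a :: "'r \<Rightarrow> 'v::euclidean_space"
  assumes "lin_ineq_set a R b \<noteq> {}" "finite J" "dual_basis a J Y"
  defines "y \<equiv> closest_point (lin_ineq_set a R b) 0"
  assumes \<mu>: "\<forall>j\<in>J. 0 \<le> \<mu> j" and y: "y = - (\<Sum>j\<in>J. \<mu> j *\<^sub>R a j)"
    and act: "\<forall>j\<in>J. a j \<bullet> y = b j"
  shows "kkt_region a R J Y b"
proof -
  define w where "w = active_point J Y b - y"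
  have "y \<in> span (a ` J)"
    unfolding y by (intro span_neg span_sum span_scale span_base) auto
  then have "w \<in> span (a ` J)"
    unfolding w_def by (intro span_diff active_point_in_span assms(3))
  have "a j \<bullet> w = 0" if "j \<in> J" for j
    using that act inner_active_point[OF assms(3,2)] by (simp add: w_def inner_diff_right)
  then have "w \<bullet> w = 0"
    by (subst (2) dual_basis_expansion[OF assms(3,2) \<open>w \<in> span (a ` J)\<close>])
      (simp add: inner_sum_right inner_commute)
  then have "active_point J Y b = y"
    by (simp add: w_def)
  moreover have "y \<in> lin_ineq_set a R b"
    unfolding y_def using assms(1) by (intro closest_point_in_set closed_lin_ineq_set)
  moreover have "Y j \<bullet> y = - \<mu> j" if "j \<in> J" for j
  proof -
    have "Y j \<bullet> y = - (\<Sum>i\<in>J. \<mu> i * (a i \<bullet> Y j))"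
      by (simp add: y inner_sum_right inner_commute)
    also have "\<dots> = - (\<Sum>i\<in>J. if i = j then \<mu> i else 0)"
      using assms(3) that by (intro arg_cong[where f = uminus] sum.cong) (auto simp: dual_basis_def)
    finally show ?thesis
      using assms(2) that by simp
  qed
  ultimately show ?thesis
    using \<mu> by (auto simp: kkt_region_def lin_ineq_set_def)
qed

theorem closest_point_piecewise_linear:
  fixes a :: "'r \<Rightarrow> 'v::euclidean_space"
  assumes "finite R"
  obtains \<J> where "finite \<J>" "\<And>J Y. (J, Y) \<in> \<J> \<Longrightarrow> J \<subseteq> R \<and> dual_basis a J Y"
    "\<And>b. lin_ineq_set a R b \<noteq> {} \<Longrightarrow> \<exists>(J, Y)\<in>\<J>. kkt_region a R J Y b"
proof -
  let ?Js = "{J. J \<subseteq> R \<and> inj_on a J \<and> independent (a ` J)}"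
  have "\<forall>J\<in>?Js. \<exists>Y. dual_basis a J Y"
    using dual_basis_exists by blast
  then obtain Yof where Yof: "\<And>J. J \<in> ?Js \<Longrightarrow> dual_basis a J (Yof J)"
    using bchoice[of ?Js "\<lambda>J Y. dual_basis a J Y"] by blast
  show ?thesis
  proof (rule that[of "(\<lambda>J. (J, Yof J)) ` ?Js"])
    show "finite ((\<lambda>J. (J, Yof J)) ` ?Js)"
      using assms by simp
    show "\<And>J Y. (J, Y) \<in> (\<lambda>J. (J, Yof J)) ` ?Js \<Longrightarrow> J \<subseteq> R \<and> dual_basis a J Y"
      using Yof by auto
    fix b assume "lin_ineq_set a R b \<noteq> {}"
    then obtain J \<mu> where J: "J \<subseteq> R" "inj_on a J" "independent (a ` J)" "\<forall>j\<in>J. 0 \<le> \<mu> j"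
      "closest_point (lin_ineq_set a R b) 0 = - (\<Sum>j\<in>J. \<mu> j *\<^sub>R a j)"
      "\<forall>j\<in>J. a j \<bullet> closest_point (lin_ineq_set a R b) 0 = b j"
      using closest_point_kkt[OF assms] by blast
    then have "kkt_region a R J (Yof J) b"
      using \<open>lin_ineq_set a R b \<noteq> {}\<close> finite_subset[OF J(1) assms] Yof[of J]
      by (intro kkt_region_if_closest_point) auto
    then show "\<exists>(J, Y)\<in>(\<lambda>J. (J, Yof J)) ` ?Js. kkt_region a R J Y b"
      using J by blast
  qed
qed

section \<open>Piecewise affine functions of the data\<close>

type_synonym ('m, 'n) zfun = "(nat \<Rightarrow> real^'n) \<Rightarrow> real^'m \<Rightarrow> real^'n \<Rightarrow> real^'n \<Rightarrow> real"

definition z_affine :: "nat \<Rightarrow> ('m::finite, 'n::finite) zfun \<Rightarrow> bool" where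
  "z_affine N \<phi> \<longleftrightarrow>
     (\<exists>r h. \<forall>P f0 w0 a0. \<phi> P f0 w0 a0 = zlin N r P f0 w0 a0 + h)"

lemma zlin_add:
  "zlin N (cP, cf, cw, ca) P f0 w0 a0 + zlin N (dP, df, dw, da) P f0 w0 a0 =
     zlin N (\<lambda>k. cP k + dP k, cf + df, cw + dw, ca + da) P f0 w0 a0"
  by (simp add: zlin_def inner_add_left sum.distrib)

lemma zlin_scale:
  "x * zlin N (cP, cf, cw, ca) P f0 w0 a0 = zlin N (\<lambda>k. x *\<^sub>R cP k, x *\<^sub>R cf, x *\<^sub>R cw, x *\<^sub>R ca) P f0 w0 a0"
  by (simp add: zlin_def sum_distrib_left distrib_left)

lemma z_affine_const: "z_affine N (\<lambda>P f0 w0 a0. h)"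
  unfolding z_affine_def by (intro exI[of _ "(\<lambda>_. 0, 0, 0, 0)"] exI[of _ h]) (simp add: zlin_def)

lemma z_affine_add:
  assumes "z_affine N \<phi>" "z_affine N \<psi>"
  shows "z_affine N (\<lambda>P f0 w0 a0. \<phi> P f0 w0 a0 + \<psi> P f0 w0 a0)"
proof -
  obtain cP cf cw ca h where \<phi>: "\<And>P f0 w0 a0. \<phi> P f0 w0 a0 = zlin N (cP, cf, cw, ca) P f0 w0 a0 + h"
    using assms(1) unfolding z_affine_def by (metis prod_cases4)
  obtain dP df dw da h' where \<psi>: "\<And>P f0 w0 a0. \<psi> P f0 w0 a0 = zlin N (dP, df, dw, da) P f0 w0 a0 + h'"
    using assms(2) unfolding z_affine_def by (metis prod_cases4)
  show ?thesis
    unfolding z_affine_def \<phi> \<psi>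
    by (intro exI[of _ "(\<lambda>k. cP k + dP k, cf + df, cw + dw, ca + da)"] exI[of _ "h + h'"] allI)
      (simp add: flip: zlin_add)
qed

lemma z_affine_scale:
  assumes "z_affine N \<phi>"
  shows "z_affine N (\<lambda>P f0 w0 a0. x * \<phi> P f0 w0 a0)"
proof -
  obtain cP cf cw ca h where \<phi>: "\<And>P f0 w0 a0. \<phi> P f0 w0 a0 = zlin N (cP, cf, cw, ca) P f0 w0 a0 + h"
    using assms unfolding z_affine_def by (metis prod_cases4)
  show ?thesis
    unfolding z_affine_def \<phi>
    by (intro exI[of _ "(\<lambda>k. x *\<^sub>R cP k, x *\<^sub>R cf, x *\<^sub>R cw, x *\<^sub>R ca)"] exI[of _ "x * h"] allI)
      (simp add: distrib_left flip: zlin_scale)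
qed

lemma z_affine_uminus:
  "z_affine N \<phi> \<Longrightarrow> z_affine N (\<lambda>P f0 w0 a0. - \<phi> P f0 w0 a0)"
  using z_affine_scale[of N \<phi> "- 1"] by simp

lemma z_affine_diff:
  assumes "z_affine N \<phi>" "z_affine N \<psi>"
  shows "z_affine N (\<lambda>P f0 w0 a0. \<phi> P f0 w0 a0 - \<psi> P f0 w0 a0)"
  using z_affine_add[OF assms(1) z_affine_scale[OF assms(2), of "- 1"]] by simp

lemma z_affine_sum:
  assumes "\<And>j. j \<in> J \<Longrightarrow> z_affine N (\<phi> j)"
  shows "z_affine N (\<lambda>P f0 w0 a0. \<Sum>j\<in>J. \<phi> j P f0 w0 a0)"
  using assms by (induction J rule: infinite_finite_induct) (auto intro!: z_affine_add z_affine_const)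

lemma z_affine_P:
  fixes i :: "'n::finite"
  assumes "k < N"
  shows "z_affine N (\<lambda>P f0 w0 a0. P k $ i)"
proof -
  have "(\<Sum>k'<N. (if k' = k then axis i 1 else 0) \<bullet> P k') = P k $ i" for P :: "nat \<Rightarrow> real^'n"
  proof -
    have "(\<Sum>k'<N. (if k' = k then axis i 1 else 0) \<bullet> P k') = (\<Sum>k'<N. if k' = k then P k $ i else 0)"
      by (intro sum.cong) (auto simp: inner_axis')
    with assms show ?thesis
      by simp
  qed
  then show ?thesis
    unfolding z_affine_def zlin_def
    by (intro exI[of _ "(\<lambda>k'. if k' = k then axis i 1 else 0, 0, 0, 0)"] exI[of _ 0] allI) simp
qed

lemma z_affine_f0: "z_affine N (\<lambda>P f0 w0 a0. f0 $ e)"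
  unfolding z_affine_def zlin_def
  by (intro exI[of _ "(\<lambda>_. 0, axis e 1, 0, 0)"] exI[of _ 0] allI) (simp add: inner_axis')

lemma z_affine_w0: "z_affine N (\<lambda>P f0 w0 a0. w0 $ i)"
  unfolding z_affine_def zlin_def
  by (intro exI[of _ "(\<lambda>_. 0, 0, axis i 1, 0)"] exI[of _ 0] allI) (simp add: inner_axis')

lemma z_affine_a0: "z_affine N (\<lambda>P f0 w0 a0. a0 $ i)"
  unfolding z_affine_def zlin_def
  by (intro exI[of _ "(\<lambda>_. 0, 0, 0, axis i 1)"] exI[of _ 0] allI) (simp add: inner_axis')

lemma z_affine_inner_comb:
  assumes "\<And>j. j \<in> J \<Longrightarrow> z_affine N (\<lambda>P f0 w0 a0. b P f0 w0 a0 j)"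
  shows "z_affine N (\<lambda>P f0 w0 a0. v \<bullet> (\<Sum>j\<in>J. b P f0 w0 a0 j *\<^sub>R Y j))"
  using assms by (simp add: inner_sum_right mult.commute[of "b _ _ _ _ _"] z_affine_sum z_affine_scale)

definition z_affine_vec :: "nat \<Rightarrow> ((nat \<Rightarrow> real^'n) \<Rightarrow> real^'m \<Rightarrow> real^'n \<Rightarrow> real^'n \<Rightarrow> real^'k) \<Rightarrow> bool"
  where "z_affine_vec N X \<longleftrightarrow> (\<forall>i. z_affine N (\<lambda>P f0 w0 a0. X P f0 w0 a0 $ i))"

lemma z_affine_vec_add:
  "z_affine_vec N X \<Longrightarrow> z_affine_vec N Z \<Longrightarrow> z_affine_vec N (\<lambda>P f0 w0 a0. X P f0 w0 a0 + Z P f0 w0 a0)"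
  by (auto simp: z_affine_vec_def intro!: z_affine_add)

lemma z_affine_vec_diff:
  "z_affine_vec N X \<Longrightarrow> z_affine_vec N Z \<Longrightarrow> z_affine_vec N (\<lambda>P f0 w0 a0. X P f0 w0 a0 - Z P f0 w0 a0)"
  by (auto simp: z_affine_vec_def intro!: z_affine_diff)

lemma z_affine_vec_uminus:
  "z_affine_vec N X \<Longrightarrow> z_affine_vec N (\<lambda>P f0 w0 a0. - X P f0 w0 a0)"
  by (auto simp: z_affine_vec_def intro!: z_affine_uminus)

lemma z_affine_vec_scaleR:
  "z_affine_vec N X \<Longrightarrow> z_affine_vec N (\<lambda>P f0 w0 a0. x *\<^sub>R X P f0 w0 a0)"
  by (auto simp: z_affine_vec_def intro!: z_affine_scale)

lemma z_affine_vec_mult: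
  "z_affine_vec N X \<Longrightarrow> z_affine_vec N (\<lambda>P f0 w0 a0. A *v X P f0 w0 a0)"
  unfolding z_affine_vec_def matrix_vector_mult_def by (auto intro!: z_affine_sum z_affine_scale)

lemma z_affine_vec_P: "k < N \<Longrightarrow> z_affine_vec N (\<lambda>P f0 w0 a0. P k)"
  by (simp add: z_affine_vec_def z_affine_P)

lemma z_affine_vec_f0: "z_affine_vec N (\<lambda>P f0 w0 a0. f0)"
  by (simp add: z_affine_vec_def z_affine_f0)

lemma z_affine_vec_w0: "z_affine_vec N (\<lambda>P f0 w0 a0. w0)"
  by (simp add: z_affine_vec_def z_affine_w0)

definition z_near ::
  "nat \<Rightarrow> real \<Rightarrow> (nat \<Rightarrow> real^'n) \<Rightarrow> real^'m \<Rightarrow> real^'n \<Rightarrow> real^'n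
     \<Rightarrow> (nat \<Rightarrow> real^'n) \<Rightarrow> real^'m \<Rightarrow> real^'n \<Rightarrow> real^'n \<Rightarrow> bool" where
  "z_near N \<delta> P f0 w0 a0 P' f0' w0' a0' \<longleftrightarrow>
     (\<forall>k<N. dist (P' k) (P k) < \<delta>) \<and> dist f0' f0 < \<delta> \<and> dist w0' w0 < \<delta> \<and> dist a0' a0 < \<delta>"

lemma inner_diff_le_norm_mult: "dist v' v < \<delta> \<Longrightarrow> \<bar>x \<bullet> v' - x \<bullet> v\<bar> \<le> norm x * \<delta>"
  using Cauchy_Schwarz_ineq2[of x "v' - v"] mult_left_mono[of "norm (v' - v)" \<delta> "norm x"]
  by (simp add: dist_norm inner_diff_right)

lemma zlin_diff_le:
  assumes "z_near N \<delta> P f0 w0 a0 P' f0' w0' a0'"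
  shows "\<bar>zlin N (cP, cf, cw, ca) P' f0' w0' a0' - zlin N (cP, cf, cw, ca) P f0 w0 a0\<bar>
           \<le> ((\<Sum>k<N. norm (cP k)) + norm cf + norm cw + norm ca) * \<delta>"
proof -
  have "\<bar>\<Sum>k<N. cP k \<bullet> P' k - cP k \<bullet> P k\<bar> \<le> (\<Sum>k<N. norm (cP k) * \<delta>)"
    using assms by (intro order_trans[OF sum_abs] sum_mono inner_diff_le_norm_mult) (auto simp: z_near_def)
  moreover have "\<bar>cf \<bullet> f0' - cf \<bullet> f0\<bar> \<le> norm cf * \<delta>" "\<bar>cw \<bullet> w0' - cw \<bullet> w0\<bar> \<le> norm cw * \<delta>"
    "\<bar>ca \<bullet> a0' - ca \<bullet> a0\<bar> \<le> norm ca * \<delta>"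
    using assms by (auto simp: z_near_def intro: inner_diff_le_norm_mult)
  ultimately show ?thesis
    by (simp add: zlin_def sum_subtractf distrib_right sum_distrib_right)
qed

lemma z_affine_eventually_near:
  assumes "z_affine N \<phi>" "0 < e"
  shows "\<forall>\<^sub>F \<delta> in at_right 0. \<forall>P' f0' w0' a0'. z_near N \<delta> P f0 w0 a0 P' f0' w0' a0' \<longrightarrow>
           \<bar>\<phi> P' f0' w0' a0' - \<phi> P f0 w0 a0\<bar> < e"
proof -
  obtain cP cf cw ca h where \<phi>: "\<And>P f0 w0 a0. \<phi> P f0 w0 a0 = zlin N (cP, cf, cw, ca) P f0 w0 a0 + h"
    using assms(1) unfolding z_affine_def by (metis prod_cases4)
  define L where "L = (\<Sum>k<N. norm (cP k)) + norm cf + norm cw + norm ca"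
  have "0 \<le> L"
    by (simp add: L_def sum_nonneg)
  have "\<bar>\<phi> P' f0' w0' a0' - \<phi> P f0 w0 a0\<bar> < e"
    if "0 < \<delta>" "\<delta> < e / (L + 1)" "z_near N \<delta> P f0 w0 a0 P' f0' w0' a0'" for \<delta> P' f0' w0' a0'
  proof -
    have "\<bar>\<phi> P' f0' w0' a0' - \<phi> P f0 w0 a0\<bar> \<le> L * \<delta>"
      using zlin_diff_le[OF that(3)] by (simp add: \<phi> L_def)
    also have "\<dots> \<le> L * (e / (L + 1))"
      using \<open>0 \<le> L\<close> that(2) by (intro mult_left_mono) simp_all
    also have "\<dots> < e"
      using \<open>0 \<le> L\<close> assms(2) by (simp add: field_simps)
    finally show ?thesis .
  qed
  moreover have "0 < e / (L + 1)"
    using \<open>0 \<le> L\<close> assms(2) by simp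
  ultimately show ?thesis
    unfolding eventually_at_right[OF \<open>0 < e / (L + 1)\<close>] by blast
qed

definition piecewise_z_affine ::
  "nat \<Rightarrow> 'n set \<Rightarrow> ((nat \<Rightarrow> real^'n) \<Rightarrow> real^'m \<Rightarrow> real^'n \<Rightarrow> real^'n \<Rightarrow> real^'n) \<Rightarrow> bool" where
  "piecewise_z_affine N Iu g \<longleftrightarrow>
     (\<exists>\<P> :: (('m::finite, 'n::finite) zfun set \<times> ('n \<Rightarrow> ('m, 'n) zfun)) set. finite \<P> \<and>
        (\<forall>(C, h)\<in>\<P>. finite C \<and> (\<forall>\<phi>\<in>C. z_affine N \<phi>) \<and> (\<forall>q. z_affine N (h q))) \<and>
        (\<forall>P f0 w0 a0. a0 \<in> setA Iu \<longrightarrow> (\<exists>(C, h)\<in>\<P>. \<forall>\<phi>\<in>C. \<phi> P f0 w0 a0 \<le> 0)) \<and>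
        (\<forall>(C, h)\<in>\<P>. \<forall>P f0 w0 a0. a0 \<in> setA Iu \<longrightarrow> (\<forall>\<phi>\<in>C. \<phi> P f0 w0 a0 \<le> 0) \<longrightarrow>
           g P f0 w0 a0 = (\<chi> q. h q P f0 w0 a0)))"

text \<open>A constraint violated strictly at z stays violated near z, so a piece containing
  admissible points arbitrarily close to z contains z itself.\<close>
lemma piece_eventually_near:
  fixes h :: "'n::finite \<Rightarrow> ('m::finite, 'n) zfun"
  assumes "\<forall>\<phi>\<in>C. z_affine N \<phi>" "\<forall>q. z_affine N (h q)" "0 < e"
  shows "\<forall>\<^sub>F \<delta> in at_right 0. \<forall>P' f0' w0' a0'. z_near N \<delta> P f0 w0 a0 P' f0' w0' a0' \<longrightarrow>
           ((\<forall>\<phi>\<in>C. \<phi> P f0 w0 a0 \<le> 0) \<longrightarrow> (\<forall>q. \<bar>h q P' f0' w0' a0' - h q P f0 w0 a0\<bar> < e)) \<and>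
           (\<not> (\<forall>\<phi>\<in>C. \<phi> P f0 w0 a0 \<le> 0) \<longrightarrow> (\<exists>\<phi>\<in>C. 0 < \<phi> P' f0' w0' a0'))"
proof (cases "\<forall>\<phi>\<in>C. \<phi> P f0 w0 a0 \<le> 0")
  case True
  have "\<forall>\<^sub>F \<delta> in at_right 0. \<forall>q\<in>UNIV. \<forall>P' f0' w0' a0'. z_near N \<delta> P f0 w0 a0 P' f0' w0' a0' \<longrightarrow>
          \<bar>h q P' f0' w0' a0' - h q P f0 w0 a0\<bar> < e"
    using assms(2,3) by (intro eventually_ball_finite ballI z_affine_eventually_near) simp_all
  then show ?thesis
    by (rule eventually_mono) (simp add: True)
next
  case False
  then obtain \<phi> where "\<phi> \<in> C" "0 < \<phi> P f0 w0 a0"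
    by (auto simp: not_le)
  then have "\<forall>\<^sub>F \<delta> in at_right 0. \<forall>P' f0' w0' a0'. z_near N \<delta> P f0 w0 a0 P' f0' w0' a0' \<longrightarrow>
          \<bar>\<phi> P' f0' w0' a0' - \<phi> P f0 w0 a0\<bar> < \<phi> P f0 w0 a0"
    using assms(1) by (intro z_affine_eventually_near) auto
  then show ?thesis
  proof (rule eventually_mono)
    fix \<delta> assume close: "\<forall>P' f0' w0' a0'. z_near N \<delta> P f0 w0 a0 P' f0' w0' a0' \<longrightarrow>
          \<bar>\<phi> P' f0' w0' a0' - \<phi> P f0 w0 a0\<bar> < \<phi> P f0 w0 a0"
    have "0 < \<phi> P' f0' w0' a0'" if "z_near N \<delta> P f0 w0 a0 P' f0' w0' a0'" for P' f0' w0' a0'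
      using close that by (auto simp: abs_less_iff)
    with False \<open>\<phi> \<in> C\<close> show "\<forall>P' f0' w0' a0'. z_near N \<delta> P f0 w0 a0 P' f0' w0' a0' \<longrightarrow>
           ((\<forall>\<phi>\<in>C. \<phi> P f0 w0 a0 \<le> 0) \<longrightarrow> (\<forall>q. \<bar>h q P' f0' w0' a0' - h q P f0 w0 a0\<bar> < e)) \<and>
           (\<not> (\<forall>\<phi>\<in>C. \<phi> P f0 w0 a0 \<le> 0) \<longrightarrow> (\<exists>\<phi>\<in>C. 0 < \<phi> P' f0' w0' a0'))"
      by blast
  qed
qed

theorem piecewise_z_affine_imp_z_continuous:
  fixes g :: "(nat \<Rightarrow> real^'n::finite) \<Rightarrow> real^'m::finite \<Rightarrow> real^'n \<Rightarrow> real^'n \<Rightarrow> real^'n"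
  assumes "piecewise_z_affine N Iu g"
  shows "z_continuous N Iu g"
  unfolding z_continuous_def
proof (intro allI impI)
  fix P :: "nat \<Rightarrow> real^'n" and f0 :: "real^'m" and w0 a0 :: "real^'n" and \<epsilon> :: real
  assume "a0 \<in> setA Iu" "0 < \<epsilon>"
  obtain \<P> :: "(('m, 'n) zfun set \<times> ('n \<Rightarrow> ('m, 'n) zfun)) set" where
    fin: "finite \<P>" and aff: "\<forall>(C, h)\<in>\<P>. finite C \<and> (\<forall>\<phi>\<in>C. z_affine N \<phi>) \<and> (\<forall>q. z_affine N (h q))"
    and cover: "\<forall>P f0 w0 a0. a0 \<in> setA Iu \<longrightarrow> (\<exists>(C, h)\<in>\<P>. \<forall>\<phi>\<in>C. \<phi> P f0 w0 a0 \<le> 0)"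
    and sound: "\<forall>(C, h)\<in>\<P>. \<forall>P f0 w0 a0. a0 \<in> setA Iu \<longrightarrow> (\<forall>\<phi>\<in>C. \<phi> P f0 w0 a0 \<le> 0) \<longrightarrow>
           g P f0 w0 a0 = (\<chi> q. h q P f0 w0 a0)"
    using assms unfolding piecewise_z_affine_def by (elim exE conjE) (rule that)
  define e where "e = \<epsilon> / CARD('n)"
  define good where "good \<delta> C h \<longleftrightarrow> (\<forall>P' f0' w0' a0'. z_near N \<delta> P f0 w0 a0 P' f0' w0' a0' \<longrightarrow>
      ((\<forall>\<phi>\<in>C. \<phi> P f0 w0 a0 \<le> 0) \<longrightarrow> (\<forall>q. \<bar>h q P' f0' w0' a0' - h q P f0 w0 a0\<bar> < e)) \<and>
      (\<not> (\<forall>\<phi>\<in>C. \<phi> P f0 w0 a0 \<le> 0) \<longrightarrow> (\<exists>\<phi>\<in>C. 0 < \<phi> P' f0' w0' a0')))"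
    for \<delta> and C :: "('m, 'n) zfun set" and h :: "'n \<Rightarrow> ('m, 'n) zfun"
  have "0 < e"
    using \<open>0 < \<epsilon>\<close> by (simp add: e_def)
  then have "\<forall>\<^sub>F \<delta> in at_right 0. \<forall>p\<in>\<P>. good \<delta> (fst p) (snd p)"
    using fin aff unfolding good_def
    by (intro eventually_ball_finite ballI piece_eventually_near) (auto simp: case_prod_beta)
  then have "\<forall>\<^sub>F \<delta> in at_right 0. 0 < \<delta> \<and> (\<forall>p\<in>\<P>. good \<delta> (fst p) (snd p))"
    using eventually_at_right_less[of 0] by (rule eventually_conj[rotated])
  then obtain \<delta> where "0 < \<delta>" and good_pieces: "\<forall>p\<in>\<P>. good \<delta> (fst p) (snd p)"
    using eventually_happens'[OF trivial_limit_at_right_real] by blast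
  have \<delta>: "good \<delta> C h" if "(C, h) \<in> \<P>" for C h
    using bspec[OF good_pieces that] by simp
  show "\<exists>\<delta>>0. \<forall>P' f0' w0' a0'. a0' \<in> setA Iu \<longrightarrow> (\<forall>k<N. dist (P' k) (P k) < \<delta>) \<longrightarrow>
          dist f0' f0 < \<delta> \<longrightarrow> dist w0' w0 < \<delta> \<longrightarrow> dist a0' a0 < \<delta> \<longrightarrow>
          dist (g P' f0' w0' a0') (g P f0 w0 a0) < \<epsilon>"
  proof (intro exI[of _ \<delta>] conjI allI impI \<open>0 < \<delta>\<close>)
    fix P' f0' w0' a0'
    assume "a0' \<in> setA Iu" "\<forall>k<N. dist (P' k) (P k) < \<delta>" "dist f0' f0 < \<delta>" "dist w0' w0 < \<delta>"
      "dist a0' a0 < \<delta>"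
    then have near: "z_near N \<delta> P f0 w0 a0 P' f0' w0' a0'"
      by (simp add: z_near_def)
    obtain C h where Ch: "(C, h) \<in> \<P>" "\<forall>\<phi>\<in>C. \<phi> P' f0' w0' a0' \<le> 0"
      using cover \<open>a0' \<in> setA Iu\<close> by blast
    have "\<forall>\<phi>\<in>C. \<phi> P f0 w0 a0 \<le> 0"
      using \<delta>[OF Ch(1)] Ch(2) near unfolding good_def by (meson not_le)
    then have "g P' f0' w0' a0' - g P f0 w0 a0 = (\<chi> q. h q P' f0' w0' a0' - h q P f0 w0 a0)"
      using sound Ch \<open>a0 \<in> setA Iu\<close> \<open>a0' \<in> setA Iu\<close> by (auto simp: vec_eq_iff)
    then have "dist (g P' f0' w0' a0') (g P f0 w0 a0) \<le> (\<Sum>q\<in>UNIV. \<bar>h q P' f0' w0' a0' - h q P f0 w0 a0\<bar>)"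
      using norm_le_l1_cart[of "g P' f0' w0' a0' - g P f0 w0 a0"] by (simp add: dist_norm)
    also have "\<dots> < (\<Sum>q\<in>(UNIV :: 'n set). e)"
      by (rule sum_strict_mono)
        (use \<delta>[OF Ch(1)] near \<open>\<forall>\<phi>\<in>C. \<phi> P f0 w0 a0 \<le> 0\<close> in \<open>auto simp: good_def\<close>)
    also have "\<dots> = \<epsilon>"
      by (simp add: e_def)
    finally show "dist (g P' f0' w0' a0') (g P f0 w0 a0) < \<epsilon>" .
  qed
qed

definition z_affine_coeffs :: "nat \<Rightarrow> ('m::finite, 'n::finite) zfun \<Rightarrow> ('m, 'n) zrow \<times> real" where
  "z_affine_coeffs N \<phi> = (SOME rh. \<forall>P f0 w0 a0. \<phi> P f0 w0 a0 = zlin N (fst rh) P f0 w0 a0 + snd rh)"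

lemma z_affine_coeffs:
  assumes "z_affine N \<phi>"
  shows "\<phi> P f0 w0 a0 = zlin N (fst (z_affine_coeffs N \<phi>)) P f0 w0 a0 + snd (z_affine_coeffs N \<phi>)"
proof -
  have "\<exists>rh. \<forall>P f0 w0 a0. \<phi> P f0 w0 a0 = zlin N (fst rh) P f0 w0 a0 + snd rh"
    using assms by (auto simp: z_affine_def)
  then show ?thesis
    unfolding z_affine_coeffs_def by (rule someI2_ex) blast
qed

lemma all_nth_z_affine_coeffs_iff:
  assumes "\<forall>\<phi>\<in>set cs. z_affine N \<phi>"
  shows "(\<forall>j<length cs. zlin N (fst (z_affine_coeffs N (cs ! j))) P f0 w0 a0 \<le> - snd (z_affine_coeffs N (cs ! j)))
           \<longleftrightarrow> (\<forall>\<phi>\<in>set cs. \<phi> P f0 w0 a0 \<le> 0)"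
proof -
  have "(zlin N (fst (z_affine_coeffs N \<phi>)) P f0 w0 a0 \<le> - snd (z_affine_coeffs N \<phi>)) \<longleftrightarrow> \<phi> P f0 w0 a0 \<le> 0"
    if "\<phi> \<in> set cs" for \<phi>
    using z_affine_coeffs[of N \<phi> P f0 w0 a0] assms that by auto
  then show ?thesis
    by (auto simp: all_set_conv_all_nth)
qed

theorem piecewise_z_affine_explicit:
  fixes g :: "(nat \<Rightarrow> real^'n::finite) \<Rightarrow> real^'m::finite \<Rightarrow> real^'n \<Rightarrow> real^'n \<Rightarrow> real^'n"
  assumes "piecewise_z_affine N Iu g"
  shows "\<exists>(l::nat) (r::nat \<Rightarrow> nat) (H::nat \<Rightarrow> nat \<Rightarrow> ('m,'n) zrow) (h::nat \<Rightarrow> nat \<Rightarrow> real)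
           (S::nat \<Rightarrow> 'n \<Rightarrow> ('m,'n) zrow) (sv::nat \<Rightarrow> real^'n).
          (\<forall>P f0 w0 a0. a0 \<in> setA Iu \<longrightarrow>
             (\<exists>i\<in>{1..l}. \<forall>j<r i. zlin N (H i j) P f0 w0 a0 \<le> h i j)) \<and>
          (\<forall>i\<in>{1..l}. \<forall>P f0 w0 a0. a0 \<in> setA Iu \<longrightarrow>
             (\<forall>j<r i. zlin N (H i j) P f0 w0 a0 \<le> h i j) \<longrightarrow>
             g P f0 w0 a0 = (\<chi> q. zlin N (S i q) P f0 w0 a0 + sv i $ q))"
proof -
  obtain \<P> :: "(('m, 'n) zfun set \<times> ('n \<Rightarrow> ('m, 'n) zfun)) set" where
    fin: "finite \<P>" and aff: "\<forall>(C, h)\<in>\<P>. finite C \<and> (\<forall>\<phi>\<in>C. z_affine N \<phi>) \<and> (\<forall>q. z_affine N (h q))"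
    and cover: "\<forall>P f0 w0 a0. a0 \<in> setA Iu \<longrightarrow> (\<exists>(C, h)\<in>\<P>. \<forall>\<phi>\<in>C. \<phi> P f0 w0 a0 \<le> 0)"
    and sound: "\<forall>(C, h)\<in>\<P>. \<forall>P f0 w0 a0. a0 \<in> setA Iu \<longrightarrow> (\<forall>\<phi>\<in>C. \<phi> P f0 w0 a0 \<le> 0) \<longrightarrow>
           g P f0 w0 a0 = (\<chi> q. h q P f0 w0 a0)"
    using assms unfolding piecewise_z_affine_def by (elim exE conjE) (rule that)
  obtain ps where ps: "set ps = \<P>"
    using finite_list[OF fin] by blast
  define piece where "piece i = ps ! (i - 1)" for i
  define cs where "cs i = (SOME xs. set xs = fst (piece i))" for i
  let ?H = "\<lambda>i j. fst (z_affine_coeffs N (cs i ! j))" and ?h = "\<lambda>i j. - snd (z_affine_coeffs N (cs i ! j))"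
  have piece: "piece i \<in> \<P>" if "i \<in> {1..length ps}" for i
    using that ps by (auto simp: piece_def)
  have cs: "set (cs i) = fst (piece i)" and aff_cs: "\<forall>\<phi>\<in>set (cs i). z_affine N \<phi>"
    and aff_h: "z_affine N (snd (piece i) q)" if "i \<in> {1..length ps}" for i q
  proof -
    have "finite (fst (piece i))"
      using bspec[OF aff piece[OF that]] by (simp add: case_prod_beta)
    then show "set (cs i) = fst (piece i)"
      unfolding cs_def by (rule someI_ex[OF finite_list])
    then show "\<forall>\<phi>\<in>set (cs i). z_affine N \<phi>" "z_affine N (snd (piece i) q)"
      using bspec[OF aff piece[OF that]] by (auto simp: case_prod_beta)
  qed
  show ?thesis
  proof (intro exI conjI)
    show "\<forall>P f0 w0 a0. a0 \<in> setA Iu \<longrightarrow> (\<exists>i\<in>{1..length ps}. \<forall>j<length (cs i). zlin N (?H i j) P f0 w0 a0 \<le> ?h i j)"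
    proof (intro allI impI)
      fix P f0 w0 a0 assume "a0 \<in> setA Iu"
      then obtain C h where "(C, h) \<in> \<P>" "\<forall>\<phi>\<in>C. \<phi> P f0 w0 a0 \<le> 0"
        using cover by blast
      then obtain m where "m < length ps" "ps ! m = (C, h)"
        using ps by (metis in_set_conv_nth)
      then have "Suc m \<in> {1..length ps}" "piece (Suc m) = (C, h)"
        by (auto simp: piece_def)
      with \<open>\<forall>\<phi>\<in>C. \<phi> P f0 w0 a0 \<le> 0\<close> show "\<exists>i\<in>{1..length ps}. \<forall>j<length (cs i). zlin N (?H i j) P f0 w0 a0 \<le> ?h i j"
        using all_nth_z_affine_coeffs_iff[OF aff_cs] cs by (metis fst_conv)
    qed
    show "\<forall>i\<in>{1..length ps}. \<forall>P f0 w0 a0. a0 \<in> setA Iu \<longrightarrow>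
            (\<forall>j<length (cs i). zlin N (?H i j) P f0 w0 a0 \<le> ?h i j) \<longrightarrow>
            g P f0 w0 a0 = (\<chi> q. zlin N (fst (z_affine_coeffs N (snd (piece i) q))) P f0 w0 a0
                                 + (\<chi> q. snd (z_affine_coeffs N (snd (piece i) q))) $ q)"
    proof (intro ballI allI impI)
      fix i P f0 w0 a0
      assume i: "i \<in> {1..length ps}" and "a0 \<in> setA Iu"
        and "\<forall>j<length (cs i). zlin N (?H i j) P f0 w0 a0 \<le> ?h i j"
      then have "\<forall>\<phi>\<in>fst (piece i). \<phi> P f0 w0 a0 \<le> 0"
        using all_nth_z_affine_coeffs_iff[OF aff_cs[OF i]] cs[OF i] by simp
      then have "g P f0 w0 a0 = (\<chi> q. snd (piece i) q P f0 w0 a0)"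
        using bspec[OF sound piece[OF i]] \<open>a0 \<in> setA Iu\<close> by (auto simp: case_prod_beta)
      then show "g P f0 w0 a0 = (\<chi> q. zlin N (fst (z_affine_coeffs N (snd (piece i) q))) P f0 w0 a0
                                 + (\<chi> q. snd (z_affine_coeffs N (snd (piece i) q))) $ q)"
        using z_affine_coeffs[OF aff_h[OF i]] by simp
    qed
  qed
qed

section \<open>The problem R\<close>

lemma invertible_if_pos_diag:
  fixes M :: "real^'n::finite^'n"
  assumes "is_pos_diag M"
  shows "invertible M"
proof -
  have "det M = (\<Prod>i\<in>UNIV. M $ i $ i)"
    using assms by (intro det_diagonal) (simp add: is_pos_diag_def)
  also have "\<dots> > 0"
    using assms by (intro prod_pos) (simp add: is_pos_diag_def)
  finally show ?thesis
    by (simp add: invertible_det_nz)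
qed

lemma matrix_inv_cancel:
  fixes A :: "real^'n::finite^'n"
  assumes "invertible A"
  shows "A *v (matrix_inv A *v x) = x" "matrix_inv A *v (A *v x) = x"
proof -
  have "A ** matrix_inv A = mat 1 \<and> matrix_inv A ** A = mat 1"
    using assms unfolding invertible_def matrix_inv_def by (rule someI_ex)
  then show "A *v (matrix_inv A *v x) = x" "matrix_inv A *v (A *v x) = x"
    by (simp_all add: matrix_vector_mul_assoc)
qed

text \<open>Rows of the constraint system: Lower k i and Upper k i bound the frequency of node i at
  step k + 1, Input_pos i and Input_neg i bound the input u_i, and Off_pos i, Off_neg i force the
  coordinates outside Iu to vanish.\<close>
datatype 'i constraint = Lower nat 'i | Upper nat 'i | Input_pos 'i | Input_neg 'i | Off_pos 'i | Off_neg 'i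

locale problem_R =
  fixes T :: real and N :: nat and Yb :: "real^'m::finite^'m" and D :: "real^'n::finite^'m"
    and M E :: "real^'n^'n" and Ti :: "'n \<Rightarrow> real" and Iu Iw :: "'n set"
    and wlo whi eps c :: "'n \<Rightarrow> real" and d :: real
  assumes invertible_M: "invertible M"
    and c_pos: "\<forall>i\<in>Iu. 0 < c i" and eps_nonneg: "\<forall>i\<in>Iu. 0 \<le> eps i" and d_pos: "0 < d"
begin

primrec traj :: "(nat \<Rightarrow> real^'n) \<Rightarrow> real^'m \<Rightarrow> real^'n \<Rightarrow> real^'n \<Rightarrow> nat \<Rightarrow> (real^'m) \<times> (real^'n)" where
  "traj P f0 w0 u 0 = (f0, w0)"
| "traj P f0 w0 u (Suc k) =
     (let F = fst (traj P f0 w0 u k); W = snd (traj P f0 w0 u k) in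
       (F + T *\<^sub>R (Yb *v (D *v W)),
        matrix_inv M *v (M *v W + T *\<^sub>R (- (E *v W) - transpose D *v F + P k + u))))"

primrec alpha :: "(nat \<Rightarrow> real^'n) \<Rightarrow> real^'m \<Rightarrow> real^'n \<Rightarrow> real^'n \<Rightarrow> real^'n \<Rightarrow> nat \<Rightarrow> real^'n" where
  "alpha P f0 w0 u a0 0 = a0"
| "alpha P f0 w0 u a0 (Suc k) = (\<chi> i. if i \<in> Iu then alpha P f0 w0 u a0 k $ i +
      T * (- alpha P f0 w0 u a0 k $ i / Ti i - snd (traj P f0 w0 u k) $ i + u $ i) else 0)"

definition solution :: "(nat \<Rightarrow> real^'n) \<Rightarrow> real^'m \<Rightarrow> real^'n \<Rightarrow> real^'n \<Rightarrow> real^'n \<Rightarrow> real \<Rightarrow> ('m, 'n) sol" where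
  "solution P f0 w0 a0 u \<beta> =
     ((\<lambda>k. if k \<le> N then fst (traj P f0 w0 u k) else 0), (\<lambda>k. if k \<le> N then snd (traj P f0 w0 u k) else 0),
      (\<lambda>k. if k \<le> N then alpha P f0 w0 u a0 k else 0), u, \<beta>)"

definition reduced_feasible :: "(nat \<Rightarrow> real^'n) \<Rightarrow> real^'m \<Rightarrow> real^'n \<Rightarrow> real^'n \<Rightarrow> real^'n \<Rightarrow> real \<Rightarrow> bool" where
  "reduced_feasible P f0 w0 a0 u \<beta> \<longleftrightarrow> u \<in> setA Iu \<and>
     (\<forall>k<N. \<forall>i\<in>Iw. wlo i - \<beta> \<le> snd (traj P f0 w0 u (Suc k)) $ i \<and> snd (traj P f0 w0 u (Suc k)) $ i \<le> whi i + \<beta>) \<and>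
     (\<forall>i\<in>Iu. \<bar>u $ i\<bar> \<le> eps i * \<bar>a0 $ i\<bar>)"

abbreviation feasible where "feasible \<equiv> R_feasible T N Yb D M E Ti Iu Iw wlo whi eps"

lemma feasible_solution:
  assumes "a0 \<in> setA Iu" "reduced_feasible P f0 w0 a0 u \<beta>"
  shows "feasible P f0 w0 a0 (solution P f0 w0 a0 u \<beta>)"
proof -
  have "alpha P f0 w0 u a0 k $ i = 0" if "i \<notin> Iu" for k i
    using assms(1) that by (cases k) (auto simp: setA_def)
  then show ?thesis
    unfolding R_feasible_def solution_def prod.case
    using assms(2) by (simp add: reduced_feasible_def Let_def matrix_inv_cancel invertible_M)
qed

lemma feasible_traj:
  assumes "feasible P f0 w0 a0 (F, W, Al, u, \<beta>)" "k \<le> N"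
  shows "F k = fst (traj P f0 w0 u k) \<and> W k = snd (traj P f0 w0 u k)"
  using assms(2)
proof (induction k)
  case (Suc k)
  then have IH: "F k = fst (traj P f0 w0 u k)" "W k = snd (traj P f0 w0 u k)" and "k < N"
    by auto
  then have "M *v W (Suc k) = M *v W k + T *\<^sub>R (- (E *v W k) - transpose D *v F k + P k + u)"
    using assms(1) by (simp add: R_feasible_def)
  then have "W (Suc k) = matrix_inv M *v (M *v W k + T *\<^sub>R (- (E *v W k) - transpose D *v F k + P k + u))"
    by (metis matrix_inv_cancel(2) invertible_M)
  moreover have "F (Suc k) = F k + T *\<^sub>R (Yb *v (D *v W k))"
    using assms(1) \<open>k < N\<close> by (simp add: R_feasible_def)
  ultimately show ?case
    by (simp add: IH Let_def)
qed (use assms(1) in \<open>simp add: R_feasible_def\<close>)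

lemma feasible_alpha:
  assumes "feasible P f0 w0 a0 (F, W, Al, u, \<beta>)" "k \<le> N"
  shows "Al k = alpha P f0 w0 u a0 k"
  using assms(2)
proof (induction k)
  case (Suc k)
  then have "W k = snd (traj P f0 w0 u k)" "Al k = alpha P f0 w0 u a0 k" "k < N"
    using feasible_traj[OF assms(1), of k] by auto
  with Suc.prems assms(1) show ?case
    by (simp add: R_feasible_def vec_eq_iff)
qed (use assms(1) in \<open>simp add: R_feasible_def\<close>)

lemma feasible_imp_solution:
  assumes "feasible P f0 w0 a0 (F, W, Al, u, \<beta>)"
  shows "(F, W, Al, u, \<beta>) = solution P f0 w0 a0 u \<beta> \<and> reduced_feasible P f0 w0 a0 u \<beta>"
proof -
  have "F = (\<lambda>k. if k \<le> N then fst (traj P f0 w0 u k) else 0)"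
    "W = (\<lambda>k. if k \<le> N then snd (traj P f0 w0 u k) else 0)"
    "Al = (\<lambda>k. if k \<le> N then alpha P f0 w0 u a0 k else 0)"
    using feasible_traj[OF assms] feasible_alpha[OF assms] assms by (auto simp: R_feasible_def not_le)
  moreover have "reduced_feasible P f0 w0 a0 u \<beta>"
    using assms feasible_traj[OF assms, of "Suc _"] by (auto simp: R_feasible_def reduced_feasible_def Suc_le_eq)
  ultimately show ?thesis
    by (simp add: solution_def)
qed

lemma feasible_iff:
  assumes "a0 \<in> setA Iu"
  shows "feasible P f0 w0 a0 s \<longleftrightarrow> (\<exists>u \<beta>. reduced_feasible P f0 w0 a0 u \<beta> \<and> s = solution P f0 w0 a0 u \<beta>)"
  using feasible_solution[OF assms] feasible_imp_solution by (cases s rule: prod_cases5) blast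

lemma R_cost_solution: "R_cost c d Iu (solution P f0 w0 a0 u \<beta>) = (\<Sum>i\<in>Iu. c i * (u $ i)\<^sup>2) + d * \<beta>\<^sup>2"
  by (simp add: R_cost_def solution_def)

primrec gain :: "nat \<Rightarrow> (real^'n^'m) \<times> (real^'n^'n)" where
  "gain 0 = (0, 0)"
| "gain (Suc k) =
     (let GF = fst (gain k); GW = snd (gain k) in
       (GF + T *\<^sub>R ((Yb ** D) ** GW),
        matrix_inv M ** (M ** GW + T *\<^sub>R (mat 1 - E ** GW - transpose D ** GF))))"

lemma gain_Suc_mult:
  "fst (gain (Suc k)) *v u = fst (gain k) *v u + T *\<^sub>R (Yb *v (D *v (snd (gain k) *v u)))"
  "snd (gain (Suc k)) *v u = matrix_inv M *v (M *v (snd (gain k) *v u) +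
      T *\<^sub>R (u - E *v (snd (gain k) *v u) - transpose D *v (fst (gain k) *v u)))"
  by (simp_all add: Let_def algebra_simps del: transpose_matrix_vector
      flip: scaleR_matrix_vector_assoc matrix_vector_mul_assoc)

lemma traj_superposition:
  "traj P f0 w0 u k = traj P f0 w0 0 k + (fst (gain k) *v u, snd (gain k) *v u)"
proof (induction k)
  case (Suc k)
  then have "fst (traj P f0 w0 u k) = fst (traj P f0 w0 0 k) + fst (gain k) *v u"
    "snd (traj P f0 w0 u k) = snd (traj P f0 w0 0 k) + snd (gain k) *v u"
    by simp_all
  then show ?case
    by (simp add: Let_def gain_Suc_mult algebra_simps del: transpose_matrix_vector gain.simps)
qed simp

lemma z_affine_free_traj:
  "k \<le> N \<Longrightarrow> z_affine_vec N (\<lambda>P f0 w0 a0. fst (traj P f0 w0 0 k)) \<and>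
             z_affine_vec N (\<lambda>P f0 w0 a0. snd (traj P f0 w0 0 k))"
proof (induction k)
  case (Suc k)
  then have "k < N"
    by simp
  with Suc show ?case
    by (simp add: Let_def del: transpose_matrix_vector) (intro conjI z_affine_vec_add z_affine_vec_diff
        z_affine_vec_uminus z_affine_vec_scaleR z_affine_vec_mult z_affine_vec_P, simp_all)
qed (simp add: z_affine_vec_f0 z_affine_vec_w0)

definition encode :: "real^'n \<Rightarrow> real \<Rightarrow> (real^'n) \<times> real" where
  "encode u \<beta> = ((\<chi> q. sqrt (c q) * u $ q), sqrt d * \<beta>)"

definition decode :: "(real^'n) \<times> real \<Rightarrow> (real^'n) \<times> real" where
  "decode y = ((\<chi> q. if q \<in> Iu then fst y $ q / sqrt (c q) else 0), snd y / sqrt d)"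

lemma decode_encode: "u \<in> setA Iu \<Longrightarrow> decode (encode u \<beta>) = (u, \<beta>)"
  using c_pos d_pos by (auto simp: decode_def encode_def setA_def vec_eq_iff)

lemma fst_decode_in_setA: "fst (decode y) \<in> setA Iu"
  by (simp add: decode_def setA_def)

lemma cost_decode:
  assumes "\<forall>q. q \<notin> Iu \<longrightarrow> fst y $ q = 0"
  shows "(\<Sum>i\<in>Iu. c i * (fst (decode y) $ i)\<^sup>2) + d * (snd (decode y))\<^sup>2 = y \<bullet> y"
proof -
  have "(\<Sum>i\<in>Iu. c i * (fst (decode y) $ i)\<^sup>2) = (\<Sum>i\<in>Iu. (fst y $ i)\<^sup>2)"
    using c_pos by (intro sum.cong) (auto simp: decode_def power_divide)
  also have "\<dots> = (\<Sum>i\<in>UNIV. (fst y $ i)\<^sup>2)"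
    using assms by (intro sum.mono_neutral_left) auto
  finally show ?thesis
    using d_pos by (simp add: inner_prod_def inner_vec_def decode_def power_divide power2_eq_square)
qed

definition constraints :: "'n constraint set" where
  "constraints = (\<lambda>(k, i). Lower k i) ` ({..<N} \<times> Iw) \<union> (\<lambda>(k, i). Upper k i) ` ({..<N} \<times> Iw) \<union>
          Input_pos ` Iu \<union> Input_neg ` Iu \<union> Off_pos ` (- Iu) \<union> Off_neg ` (- Iu)"

lemma finite_constraints: "finite constraints"
  by (simp add: constraints_def)

lemma ball_constraints:
  "(\<forall>j\<in>constraints. Q j) \<longleftrightarrow> (\<forall>k<N. \<forall>i\<in>Iw. Q (Lower k i)) \<and> (\<forall>k<N. \<forall>i\<in>Iw. Q (Upper k i)) \<and>
     (\<forall>i\<in>Iu. Q (Input_pos i)) \<and> (\<forall>i\<in>Iu. Q (Input_neg i)) \<and>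
     (\<forall>i. i \<notin> Iu \<longrightarrow> Q (Off_pos i)) \<and> (\<forall>i. i \<notin> Iu \<longrightarrow> Q (Off_neg i))"
  unfolding constraints_def by auto

definition decode_adjoint :: "real^'n \<Rightarrow> real^'n" where
  "decode_adjoint g = (\<chi> q. if q \<in> Iu then g $ q / sqrt (c q) else 0)"

text \<open>The constraints of R in the variable y = encode u \<beta>, in which the cost is the
  squared norm. The bound eps i * abs (a0 $ i) is written for a given sign pattern s of a0, so
  that for fixed s the bounds are affine in z; constraint_bound uses the actual sign pattern.\<close>
primrec constraint_vec :: "'n constraint \<Rightarrow> (real^'n) \<times> real" where
  "constraint_vec (Lower k i) = (- decode_adjoint (snd (gain (Suc k)) $ i), - 1 / sqrt d)"
| "constraint_vec (Upper k i) = (decode_adjoint (snd (gain (Suc k)) $ i), - 1 / sqrt d)"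
| "constraint_vec (Input_pos i) = (axis i (1 / sqrt (c i)), 0)"
| "constraint_vec (Input_neg i) = (axis i (- 1 / sqrt (c i)), 0)"
| "constraint_vec (Off_pos i) = (axis i 1, 0)"
| "constraint_vec (Off_neg i) = (axis i (- 1), 0)"

primrec constraint_bound_on ::
  "'n set \<Rightarrow> (nat \<Rightarrow> real^'n) \<Rightarrow> real^'m \<Rightarrow> real^'n \<Rightarrow> real^'n \<Rightarrow> 'n constraint \<Rightarrow> real" where
  "constraint_bound_on s P f0 w0 a0 (Lower k i) = snd (traj P f0 w0 0 (Suc k)) $ i - wlo i"
| "constraint_bound_on s P f0 w0 a0 (Upper k i) = whi i - snd (traj P f0 w0 0 (Suc k)) $ i"
| "constraint_bound_on s P f0 w0 a0 (Input_pos i) = eps i * (if i \<in> s then a0 $ i else - a0 $ i)"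
| "constraint_bound_on s P f0 w0 a0 (Input_neg i) = eps i * (if i \<in> s then a0 $ i else - a0 $ i)"
| "constraint_bound_on s P f0 w0 a0 (Off_pos i) = 0"
| "constraint_bound_on s P f0 w0 a0 (Off_neg i) = 0"

definition constraint_bound ::
  "(nat \<Rightarrow> real^'n) \<Rightarrow> real^'m \<Rightarrow> real^'n \<Rightarrow> real^'n \<Rightarrow> 'n constraint \<Rightarrow> real" where
  "constraint_bound P f0 w0 a0 = constraint_bound_on {i. 0 \<le> a0 $ i} P f0 w0 a0"

abbreviation encoded_feasible_set ::
  "(nat \<Rightarrow> real^'n) \<Rightarrow> real^'m \<Rightarrow> real^'n \<Rightarrow> real^'n \<Rightarrow> ((real^'n) \<times> real) set" where
  "encoded_feasible_set P f0 w0 a0 \<equiv>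
     lin_ineq_set constraint_vec constraints (constraint_bound P f0 w0 a0)"

lemma decode_adjoint_inner: "decode_adjoint g \<bullet> fst y = g \<bullet> fst (decode y)"
  unfolding inner_vec_def decode_adjoint_def decode_def by (intro sum.cong) auto

lemma snd_traj_nth_superposition:
  "snd (traj P f0 w0 u k) $ i = snd (traj P f0 w0 0 k) $ i + snd (gain k) $ i \<bullet> u"
  by (subst traj_superposition) (simp add: matrix_vector_mul_component)

lemma mem_encoded_feasible_set_iff:
  "y \<in> encoded_feasible_set P f0 w0 a0 \<longleftrightarrow>
     reduced_feasible P f0 w0 a0 (fst (decode y)) (snd (decode y)) \<and> (\<forall>q. q \<notin> Iu \<longrightarrow> fst y $ q = 0)"
proof -
  define u where "u = fst (decode y)"
  define \<beta> where "\<beta> = snd (decode y)"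
  have \<beta>: "snd y / sqrt d = \<beta>"
    by (simp add: \<beta>_def decode_def)
  have u: "fst y $ i / sqrt (c i) = u $ i" if "i \<in> Iu" for i
    using that by (simp add: u_def decode_def)
  have lower: "constraint_vec (Lower k i) \<bullet> y \<le> constraint_bound P f0 w0 a0 (Lower k i) \<longleftrightarrow>
        wlo i - \<beta> \<le> snd (traj P f0 w0 u (Suc k)) $ i"
    and upper: "constraint_vec (Upper k i) \<bullet> y \<le> constraint_bound P f0 w0 a0 (Upper k i) \<longleftrightarrow>
        snd (traj P f0 w0 u (Suc k)) $ i \<le> whi i + \<beta>" for k i
    using \<beta> by (simp_all add: inner_prod_def decode_adjoint_inner snd_traj_nth_superposition[of P f0 w0 u]
        constraint_bound_def u_def[symmetric] del: traj.simps gain.simps) argo+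
  have input: "(\<forall>i\<in>Iu. constraint_vec (Input_pos i) \<bullet> y \<le> constraint_bound P f0 w0 a0 (Input_pos i)) \<longleftrightarrow>
      (\<forall>i\<in>Iu. u $ i \<le> eps i * \<bar>a0 $ i\<bar>)"
    "(\<forall>i\<in>Iu. constraint_vec (Input_neg i) \<bullet> y \<le> constraint_bound P f0 w0 a0 (Input_neg i)) \<longleftrightarrow>
      (\<forall>i\<in>Iu. - u $ i \<le> eps i * \<bar>a0 $ i\<bar>)"
    using u by (auto simp: inner_prod_def inner_axis' constraint_bound_def abs_if)
  have off: "constraint_vec (Off_pos i) \<bullet> y \<le> constraint_bound P f0 w0 a0 (Off_pos i) \<longleftrightarrow> fst y $ i \<le> 0"
    "constraint_vec (Off_neg i) \<bullet> y \<le> constraint_bound P f0 w0 a0 (Off_neg i) \<longleftrightarrow> 0 \<le> fst y $ i" for i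
    by (simp_all add: inner_prod_def inner_axis' constraint_bound_def)
  have "y \<in> encoded_feasible_set P f0 w0 a0 \<longleftrightarrow>
     (\<forall>k<N. \<forall>i\<in>Iw. wlo i - \<beta> \<le> snd (traj P f0 w0 u (Suc k)) $ i \<and> snd (traj P f0 w0 u (Suc k)) $ i \<le> whi i + \<beta>) \<and>
     (\<forall>i\<in>Iu. \<bar>u $ i\<bar> \<le> eps i * \<bar>a0 $ i\<bar>) \<and> (\<forall>q. q \<notin> Iu \<longrightarrow> fst y $ q = 0)"
    unfolding lin_ineq_set_def mem_Collect_eq ball_constraints lower upper input off
    by (auto simp: abs_le_iff simp del: traj.simps intro: order.antisym)
  then show ?thesis
    using fst_decode_in_setA[of y] by (simp add: reduced_feasible_def u_def \<beta>_def)
qed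

lemma encoded_feasible_set_nonempty: "encoded_feasible_set P f0 w0 a0 \<noteq> {}"
proof -
  define t where "t k i = \<bar>snd (traj P f0 w0 0 (Suc k)) $ i\<bar> + \<bar>wlo i\<bar> + \<bar>whi i\<bar>" for k i
  define \<beta> where "\<beta> = (\<Sum>k<N. \<Sum>i\<in>Iw. t k i)"
  have "t k i \<le> \<beta>" if "k < N" "i \<in> Iw" for k i
  proof -
    have "t k i \<le> (\<Sum>i\<in>Iw. t k i)"
      using that by (intro member_le_sum) (auto simp: t_def)
    also have "\<dots> \<le> \<beta>"
      unfolding \<beta>_def using that by (intro member_le_sum[of k "{..<N}"] sum_nonneg) (auto simp: t_def)
    finally show ?thesis .
  qed
  then have "reduced_feasible P f0 w0 a0 0 \<beta>"
    using eps_nonneg by (fastforce simp: reduced_feasible_def setA_def t_def simp del: traj.simps)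
  moreover have "decode (encode 0 \<beta>) = (0, \<beta>)"
    by (simp add: decode_encode setA_def)
  ultimately have "encode 0 \<beta> \<in> encoded_feasible_set P f0 w0 a0"
    unfolding mem_encoded_feasible_set_iff by (simp add: encode_def)
  then show ?thesis
    by blast
qed

abbreviation encoded_optimum ::
  "(nat \<Rightarrow> real^'n) \<Rightarrow> real^'m \<Rightarrow> real^'n \<Rightarrow> real^'n \<Rightarrow> (real^'n) \<times> real" where
  "encoded_optimum P f0 w0 a0 \<equiv> closest_point (encoded_feasible_set P f0 w0 a0) 0"

lemma feasible_iff_encoded:
  assumes "a0 \<in> setA Iu"
  shows "feasible P f0 w0 a0 s \<longleftrightarrow>
           (\<exists>y\<in>encoded_feasible_set P f0 w0 a0.
              s = solution P f0 w0 a0 (fst (decode y)) (snd (decode y)))"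
proof
  assume "feasible P f0 w0 a0 s"
  then obtain u \<beta> where "reduced_feasible P f0 w0 a0 u \<beta>" "s = solution P f0 w0 a0 u \<beta>"
    using feasible_iff[OF assms] by blast
  moreover from this have "decode (encode u \<beta>) = (u, \<beta>)"
    by (simp add: reduced_feasible_def decode_encode)
  ultimately show "\<exists>y\<in>encoded_feasible_set P f0 w0 a0.
      s = solution P f0 w0 a0 (fst (decode y)) (snd (decode y))"
    by (intro bexI[of _ "encode u \<beta>"])
      (auto simp: mem_encoded_feasible_set_iff encode_def reduced_feasible_def setA_def)
qed (use feasible_solution[OF assms] mem_encoded_feasible_set_iff in blast)

lemma R_cost_decode: "y \<in> encoded_feasible_set P f0 w0 a0 \<Longrightarrow>
    R_cost c d Iu (solution P f0 w0 a0 (fst (decode y)) (snd (decode y))) = y \<bullet> y"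
  by (simp add: R_cost_solution cost_decode mem_encoded_feasible_set_iff)

lemma R_optimal_iff:
  assumes "a0 \<in> setA Iu"
  shows "R_optimal T N Yb D M E Ti Iu Iw wlo whi eps c d P f0 w0 a0 s \<longleftrightarrow>
           s = solution P f0 w0 a0 (fst (decode (encoded_optimum P f0 w0 a0)))
                 (snd (decode (encoded_optimum P f0 w0 a0)))"
    (is "?opt s \<longleftrightarrow> s = ?sol (encoded_optimum P f0 w0 a0)")
proof -
  let ?K = "encoded_feasible_set P f0 w0 a0"
  have closed: "closed ?K" and convex: "convex ?K"
    by (rule closed_lin_ineq_set convex_lin_ineq_set)+
  have opt: "encoded_optimum P f0 w0 a0 \<in> ?K" "\<forall>y\<in>?K. norm (encoded_optimum P f0 w0 a0) \<le> norm y"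
    using closest_point_exists[OF closed encoded_feasible_set_nonempty, of 0] by auto
  have opt_sol: "?opt (?sol y) \<longleftrightarrow> (\<forall>y'\<in>?K. y \<bullet> y \<le> y' \<bullet> y')" if "y \<in> ?K" for y
  proof -
    have "feasible P f0 w0 a0 (?sol y)"
      using feasible_iff_encoded[OF assms] that by blast
    then have "?opt (?sol y) \<longleftrightarrow> (\<forall>s'. feasible P f0 w0 a0 s' \<longrightarrow> R_cost c d Iu (?sol y) \<le> R_cost c d Iu s')"
      unfolding R_optimal_def by blast
    also have "\<dots> \<longleftrightarrow> (\<forall>y'\<in>?K. R_cost c d Iu (?sol y) \<le> R_cost c d Iu (?sol y'))"
      by (simp only: feasible_iff_encoded[OF assms]) blast
    also have "\<dots> \<longleftrightarrow> (\<forall>y'\<in>?K. y \<bullet> y \<le> y' \<bullet> y')"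
      using that by (simp add: R_cost_decode)
    finally show ?thesis .
  qed
  show ?thesis
  proof
    assume "?opt s"
    then obtain y where y: "y \<in> ?K" "s = ?sol y"
      unfolding R_optimal_def by (simp only: feasible_iff_encoded[OF assms]) blast
    with \<open>?opt s\<close> have "\<forall>y'\<in>?K. dist 0 y \<le> dist 0 y'"
      using opt_sol by (simp add: norm_le)
    then have "y = encoded_optimum P f0 w0 a0"
      using y(1) by (rule closest_point_unique[OF convex closed, rotated])
    with y show "s = ?sol (encoded_optimum P f0 w0 a0)"
      by simp
  qed (use opt opt_sol in \<open>simp add: norm_le\<close>)
qed

lemma u_opt_eq_decode_optimum: "a0 \<in> setA Iu \<Longrightarrow>
    u_opt T N Yb D M E Ti Iu Iw wlo whi eps c d P f0 w0 a0 = fst (decode (encoded_optimum P f0 w0 a0))"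
  by (simp add: u_opt_def R_optimal_iff solution_def)

definition in_orthant :: "'n set \<Rightarrow> real^'n \<Rightarrow> bool" where
  "in_orthant s a0 \<longleftrightarrow> (\<forall>i\<in>Iu. (i \<in> s \<longrightarrow> 0 \<le> a0 $ i) \<and> (i \<notin> s \<longrightarrow> a0 $ i \<le> 0))"

lemma constraint_bound_on_orthant:
  assumes "in_orthant s a0" "j \<in> constraints"
  shows "constraint_bound_on s P f0 w0 a0 j = constraint_bound P f0 w0 a0 j"
  using assms by (cases j) (auto simp: in_orthant_def constraint_bound_def constraints_def)

lemma z_affine_constraint_bound_on:
  assumes "j \<in> constraints"
  shows "z_affine N (\<lambda>P f0 w0 a0. constraint_bound_on s P f0 w0 a0 j)"
proof (cases j)
  case (Lower k i)
  then have "Suc k \<le> N"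
    using assms by (auto simp: constraints_def)
  with Lower show ?thesis
    using z_affine_free_traj[of "Suc k"] unfolding z_affine_vec_def
    by (simp del: traj.simps add: z_affine_diff z_affine_const)
next
  case (Upper k i)
  then have "Suc k \<le> N"
    using assms by (auto simp: constraints_def)
  with Upper show ?thesis
    using z_affine_free_traj[of "Suc k"] unfolding z_affine_vec_def
    by (simp del: traj.simps add: z_affine_diff z_affine_const)
next
  case (Input_pos i)
  then show ?thesis
    by (cases "i \<in> s") (simp_all add: z_affine_scale z_affine_uminus z_affine_a0)
next
  case (Input_neg i)
  then show ?thesis
    by (cases "i \<in> s") (simp_all add: z_affine_scale z_affine_uminus z_affine_a0)
qed (simp_all add: z_affine_const)

lemma fst_decode_nth: "fst (decode y) $ q = (if q \<in> Iu then (axis q (1 / sqrt (c q)), 0) else 0) \<bullet> y"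
  by (simp add: decode_def inner_prod_def inner_axis')

definition region_piece :: "'n set \<Rightarrow> 'n constraint set \<Rightarrow> ('n constraint \<Rightarrow> (real^'n) \<times> real) \<Rightarrow>
    ('m, 'n) zfun set \<times> ('n \<Rightarrow> ('m, 'n) zfun)" where
  "region_piece s J Y =
     ((\<lambda>i P f0 w0 a0. if i \<in> s then - a0 $ i else a0 $ i) ` Iu \<union>
      (\<lambda>j P f0 w0 a0. constraint_vec j \<bullet> active_point J Y (constraint_bound_on s P f0 w0 a0)
                          - constraint_bound_on s P f0 w0 a0 j) ` constraints \<union>
      (\<lambda>j P f0 w0 a0. Y j \<bullet> active_point J Y (constraint_bound_on s P f0 w0 a0)) ` J,
      \<lambda>q P f0 w0 a0. fst (decode (active_point J Y (constraint_bound_on s P f0 w0 a0))) $ q)"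

lemma in_region_piece_iff:
  "(\<forall>\<phi>\<in>fst (region_piece s J Y). \<phi> P f0 w0 a0 \<le> 0) \<longleftrightarrow>
     in_orthant s a0 \<and> kkt_region constraint_vec constraints J Y (constraint_bound_on s P f0 w0 a0)"
  by (auto simp: region_piece_def in_orthant_def kkt_region_def ball_Un split: if_splits)

lemma z_affine_region_piece:
  assumes "J \<subseteq> constraints"
  shows "\<forall>\<phi>\<in>fst (region_piece s J Y). z_affine N \<phi>" "z_affine N (snd (region_piece s J Y) q)"
proof -
  have b: "z_affine N (\<lambda>P f0 w0 a0. constraint_bound_on s P f0 w0 a0 j)" if "j \<in> J" for j
    using assms that z_affine_constraint_bound_on by blast
  have "z_affine N (\<lambda>P f0 w0 a0. if i \<in> s then - a0 $ i else a0 $ i)" for i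
    by (cases "i \<in> s") (simp_all add: z_affine_uminus z_affine_a0)
  then show "\<forall>\<phi>\<in>fst (region_piece s J Y). z_affine N \<phi>"
    unfolding region_piece_def active_point_def
    using assms by (auto intro!: z_affine_inner_comb z_affine_diff b z_affine_constraint_bound_on)
  show "z_affine N (snd (region_piece s J Y) q)"
    unfolding region_piece_def active_point_def fst_decode_nth snd_conv by (intro z_affine_inner_comb b)
qed

lemma in_region_piece_if_kkt_region:
  assumes "J \<subseteq> constraints"
    and "kkt_region constraint_vec constraints J Y (constraint_bound P f0 w0 a0)"
  shows "\<forall>\<phi>\<in>fst (region_piece {i\<in>Iu. 0 \<le> a0 $ i} J Y). \<phi> P f0 w0 a0 \<le> 0"
proof -
  let ?s = "{i\<in>Iu. 0 \<le> a0 $ i}"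
  have "in_orthant ?s a0"
    by (auto simp: in_orthant_def)
  then have b: "\<forall>j\<in>constraints. constraint_bound_on ?s P f0 w0 a0 j = constraint_bound P f0 w0 a0 j"
    using constraint_bound_on_orthant by simp
  have "kkt_region constraint_vec constraints J Y (constraint_bound_on ?s P f0 w0 a0)"
    using kkt_region_cong[OF assms(1) b, of constraint_vec Y] assms(2) by simp
  with \<open>in_orthant ?s a0\<close> show ?thesis
    by (simp add: in_region_piece_iff)
qed

lemma u_opt_on_region_piece:
  assumes "J \<subseteq> constraints" "dual_basis constraint_vec J Y" "a0 \<in> setA Iu"
    and "\<forall>\<phi>\<in>fst (region_piece s J Y). \<phi> P f0 w0 a0 \<le> 0"
  shows "u_opt T N Yb D M E Ti Iu Iw wlo whi eps c d P f0 w0 a0 =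
           (\<chi> q. snd (region_piece s J Y) q P f0 w0 a0)"
proof -
  have "in_orthant s a0"
    and region: "kkt_region constraint_vec constraints J Y (constraint_bound_on s P f0 w0 a0)"
    using assms(4) by (simp_all add: in_region_piece_iff)
  then have b: "\<forall>j\<in>constraints. constraint_bound_on s P f0 w0 a0 j = constraint_bound P f0 w0 a0 j"
    using constraint_bound_on_orthant by simp
  have "encoded_optimum P f0 w0 a0 = active_point J Y (constraint_bound P f0 w0 a0)"
    using region kkt_region_cong[OF assms(1) b, of constraint_vec Y]
    by (intro closest_point_eq_active_point[OF assms(1) finite_subset[OF assms(1) finite_constraints] assms(2)])
      simp
  also have "\<dots> = active_point J Y (constraint_bound_on s P f0 w0 a0)"
    using b assms(1) by (intro active_point_cong) auto
  finally show ?thesis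
    by (simp add: u_opt_eq_decode_optimum[OF assms(3)] region_piece_def vec_eq_iff)
qed

theorem piecewise_z_affine_u_opt: "piecewise_z_affine N Iu (u_opt T N Yb D M E Ti Iu Iw wlo whi eps c d)"
proof -
  obtain \<J> where \<J>: "finite \<J>" "\<And>J Y. (J, Y) \<in> \<J> \<Longrightarrow> J \<subseteq> constraints \<and> dual_basis constraint_vec J Y"
    "\<And>b. lin_ineq_set constraint_vec constraints b \<noteq> {} \<Longrightarrow>
       \<exists>(J, Y)\<in>\<J>. kkt_region constraint_vec constraints J Y b"
    using closest_point_piecewise_linear[OF finite_constraints] by blast
  let ?\<P> = "(\<lambda>(s, J, Y). region_piece s J Y) ` (Pow Iu \<times> \<J>)"
  show ?thesis
    unfolding piecewise_z_affine_def
  proof (intro exI[of _ ?\<P>] conjI ballI allI impI)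
    show "finite ?\<P>"
      using \<J>(1) by simp
  next
    fix p assume "p \<in> ?\<P>"
    then obtain s J Y where "p = region_piece s J Y" "J \<subseteq> constraints"
      using \<J>(2) by auto
    moreover have "finite (fst (region_piece s J Y))"
      using \<open>J \<subseteq> constraints\<close> finite_constraints by (auto simp: region_piece_def intro: finite_subset)
    ultimately show "case p of (C, h) \<Rightarrow> finite C \<and> (\<forall>\<phi>\<in>C. z_affine N \<phi>) \<and> (\<forall>q. z_affine N (h q))"
      using z_affine_region_piece[of J s Y] by (auto simp: case_prod_beta)
  next
    fix P :: "nat \<Rightarrow> real^'n" and f0 :: "real^'m" and w0 a0 :: "real^'n"
    obtain J Y where JY: "(J, Y) \<in> \<J>"
      "kkt_region constraint_vec constraints J Y (constraint_bound P f0 w0 a0)"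
      using \<J>(3)[OF encoded_feasible_set_nonempty] by blast
    moreover have "region_piece {i\<in>Iu. 0 \<le> a0 $ i} J Y \<in> ?\<P>"
      using JY(1) by (intro image_eqI[of _ _ "({i\<in>Iu. 0 \<le> a0 $ i}, J, Y)"]) auto
    moreover have "\<forall>\<phi>\<in>fst (region_piece {i\<in>Iu. 0 \<le> a0 $ i} J Y). \<phi> P f0 w0 a0 \<le> 0"
      using in_region_piece_if_kkt_region \<J>(2)[OF JY(1)] JY(2) by blast
    ultimately show "\<exists>(C, h)\<in>?\<P>. \<forall>\<phi>\<in>C. \<phi> P f0 w0 a0 \<le> 0"
      by (intro bexI[of _ "region_piece {i\<in>Iu. 0 \<le> a0 $ i} J Y"]) (simp_all add: case_prod_beta)
  next
    fix p assume "p \<in> ?\<P>"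
    then obtain s J Y where p: "p = region_piece s J Y" "J \<subseteq> constraints" "dual_basis constraint_vec J Y"
      using \<J>(2) by auto
    show "case p of (C, h) \<Rightarrow> \<forall>P f0 w0 a0. a0 \<in> setA Iu \<longrightarrow> (\<forall>\<phi>\<in>C. \<phi> P f0 w0 a0 \<le> 0) \<longrightarrow>
            u_opt T N Yb D M E Ti Iu Iw wlo whi eps c d P f0 w0 a0 = (\<chi> q. h q P f0 w0 a0)"
      unfolding p(1) case_prod_beta using u_opt_on_region_piece[OF p(2,3)] by blast
  qed
qed

end

theorem lemma4p1:
  fixes pos neg :: "'m::finite \<Rightarrow> 'n::finite"
    and M E :: "real^'n^'n" and Yb :: "real^'m^'m"
    and Iu Iw :: "'n set"
    and T tt d :: real and N :: nat
    and c eps Ti wlo whi :: "'n \<Rightarrow> real"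
  assumes graph: "connected_simple_graph pos neg"
    and M: "is_pos_diag M" and E: "is_pos_diag E" and Yb: "is_pos_diag Yb"
    and Iw_Iu: "Iw \<subseteq> Iu"
    and T: "T > 0" and tt: "tt > 0" and N: "N = nat \<lceil>tt / T\<rceil>"
    and c: "\<forall>i\<in>Iu. c i > 0" and eps: "\<forall>i\<in>Iu. eps i > 0" and Ti: "\<forall>i\<in>Iu. Ti i > 0"
    and d: "d > 0"
    and wb: "\<forall>i\<in>Iw. wlo i < whi i"
  shows
    "(\<forall>P f0 w0 a0. a0 \<in> setA Iu \<longrightarrow>
        (\<exists>!s. R_optimal T N Yb (incidence pos neg) M E Ti Iu Iw wlo whi eps c d P f0 w0 a0 s))
     \<and> z_continuous N Iu (u_opt T N Yb (incidence pos neg) M E Ti Iu Iw wlo whi eps c d)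
     \<and> (\<exists>(l::nat) (r::nat \<Rightarrow> nat) (H::nat \<Rightarrow> nat \<Rightarrow> ('m,'n) zrow) (h::nat \<Rightarrow> nat \<Rightarrow> real)
           (S::nat \<Rightarrow> 'n \<Rightarrow> ('m,'n) zrow) (sv::nat \<Rightarrow> real^'n).
          (\<forall>P f0 w0 a0. a0 \<in> setA Iu \<longrightarrow>
             (\<exists>i\<in>{1..l}. \<forall>j<r i. zlin N (H i j) P f0 w0 a0 \<le> h i j)) \<and>
          (\<forall>i\<in>{1..l}. \<forall>P f0 w0 a0. a0 \<in> setA Iu \<longrightarrow>
             (\<forall>j<r i. zlin N (H i j) P f0 w0 a0 \<le> h i j) \<longrightarrow>
             u_opt T N Yb (incidence pos neg) M E Ti Iu Iw wlo whi eps c d P f0 w0 a0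
               = (\<chi> q. zlin N (S i q) P f0 w0 a0 + sv i $ q)))"
proof -
  interpret problem_R T N Yb "incidence pos neg" M E Ti Iu Iw wlo whi eps c d
    using invertible_if_pos_diag[OF M] c eps d by unfold_locales (auto simp: less_imp_le)
  have unique: "\<exists>!s. R_optimal T N Yb (incidence pos neg) M E Ti Iu Iw wlo whi eps c d P f0 w0 a0 s"
    if "a0 \<in> setA Iu" for P f0 w0 a0
    using R_optimal_iff[OF that] by simp
  have pieces: "piecewise_z_affine N Iu (u_opt T N Yb (incidence pos neg) M E Ti Iu Iw wlo whi eps c d)"
    by (rule piecewise_z_affine_u_opt)
  show ?thesis
    by (intro conjI allI impI unique piecewise_z_affine_imp_z_continuous[OF pieces]
        piecewise_z_affine_explicit[OF pieces])
qed

end
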